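(* Let $\omega>\gamma^2/4$. The real functions $\mathcal{Y}_1,\mathcal{Y}_2$ (real and imaginary parts of the eigenfunction $\mathcal{Y}_+$) belong to $\widetilde{\mathcal S}(\mathbb{R})$; in particular they are $C^\infty$ on $\mathbb{R}\setminus\{0\}$.
   Context: Fix $\gamma<0$, $p>5$, $\omega>\gamma^2/4$, and let $Q=Q_{\omega,\gamma}(x)=\big[\tfrac{(p+1)\omega}{2}\operatorname{sech}^2\big(\tfrac{(p-1)\sqrt\omega}{2}|x|+\tanh^{-1}(\tfrac{\gamma}{2\sqrt\omega})\big)\big]^{1/(p-1)}$. Let $\mathcal D_{\mathrm{even}}=\{f\in H^1(\mathbb{R})\cap H^2(\mathbb{R}\setminus\{0\})\text{ even}: f'(0+)-f'(0-)=-\gamma f(0)\}$, and on real-valued functions in $\mathcal D_{\mathrm{even}}$ define $L^-f=-f''+\omega f-Q^{p-1}f$ and $L^+f=-f''+\omega f-pQ^{p-1}f$ (derivatives on $\mathbb{R}\setminus\{0\}$). For complex $f=f_1+if_2$ let $\mathcal{L}f=-L^-f_2+iL^+f_1$. It is known that $\mathcal{L}$ on even functions has a simple positive eigenvalue $e_\omega>0$ with eigenfunction $\mathcal{Y}_+=\mathcal{Y}_1+i\mathcal{Y}_2$, $\mathcal Y_1,\mathcal Y_2\in\mathcal D_{\mathrm{even}}$ real, i.e. $L^+\mathcal{Y}_1=e_\omega\mathcal{Y}_2$, $L^-\mathcal{Y}_2=-e_\omega\mathcal{Y}_1$; and $\mathcal{Y}_-:=\overline{\mathcal Y_+}$ is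 an eigenfunction for $-e_\omega$. $BC^\infty_0(\mathbb{R})$ is the set of $C^\infty$ functions all of whose derivatives are bounded and which vanish on some open interval containing $0$. $\widetilde{\mathcal S}(\mathbb{R})=\{f\in C^\infty(\mathbb{R}\setminus\{0\}): \varphi f\in\mathcal S(\mathbb{R})\text{ for all }\varphi\in BC^\infty_0(\mathbb{R})\}$, where $\mathcal S$ is the Schwartz space. *)

theory Defs
  imports "HOL-Analysis.Analysis"
begin

definition smooth_on :: "real set \<Rightarrow> (real \<Rightarrow> real) \<Rightarrow> bool" where
  "smooth_on U f \<longleftrightarrow> (\<forall>k. \<forall>x\<in>U. ((deriv ^^ k) f) differentiable (at x))"

definition schwartz :: "(real \<Rightarrow> real) set" where
  "schwartz = {f. smooth_on UNIV f \<and>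
      (\<forall>j k. \<exists>C. \<forall>x. \<bar>x ^ j * (deriv ^^ k) f x\<bar> \<le> C)}"

definition BC0_inf :: "(real \<Rightarrow> real) set" where
  "BC0_inf = {\<phi>. smooth_on UNIV \<phi> \<and> (\<forall>k. \<exists>C. \<forall>x. \<bar>(deriv ^^ k) \<phi> x\<bar> \<le> C) \<and>
      (\<exists>a b. a < 0 \<and> 0 < b \<and> (\<forall>x\<in>{a<..<b}. \<phi> x = 0))}"

definition tilde_schwartz :: "(real \<Rightarrow> real) set" where
  "tilde_schwartz = {f. smooth_on (- {0}) f \<and> (\<forall>\<phi>\<in>BC0_inf. (\<lambda>x. \<phi> x * f x) \<in> schwartz)}"

definition test_fun :: "real set \<Rightarrow> (real \<Rightarrow> real) \<Rightarrow> bool" where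
  "test_fun U \<phi> \<longleftrightarrow> smooth_on UNIV \<phi> \<and> compact (closure {x. \<phi> x \<noteq> 0})
      \<and> closure {x. \<phi> x \<noteq> 0} \<subseteq> U"

definition loc_integrable :: "real set \<Rightarrow> (real \<Rightarrow> real) \<Rightarrow> bool" where
  "loc_integrable U f \<longleftrightarrow> (\<forall>K. compact K \<and> K \<subseteq> U \<longrightarrow> set_integrable lborel K f)"

definition weak_deriv :: "real set \<Rightarrow> (real \<Rightarrow> real) \<Rightarrow> (real \<Rightarrow> real) \<Rightarrow> bool" where
  "weak_deriv U f g \<longleftrightarrow> loc_integrable U f \<and> loc_integrable U g \<and>
     (\<forall>\<phi>. test_fun U \<phi> \<longrightarrow>
        (LINT x|lborel. f x * deriv \<phi> x) = - (LINT x|lborel. g x * \<phi> x))"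

definition L2_on :: "real set \<Rightarrow> (real \<Rightarrow> real) \<Rightarrow> bool" where
  "L2_on U f \<longleftrightarrow> f \<in> borel_measurable lborel \<and> set_integrable lborel U (\<lambda>x. (f x)\<^sup>2)"

definition H1 :: "(real \<Rightarrow> real) \<Rightarrow> bool" where
  "H1 f \<longleftrightarrow> L2_on UNIV f \<and> (\<exists>g. L2_on UNIV g \<and> weak_deriv UNIV f g)"

definition H2_punct_with :: "(real \<Rightarrow> real) \<Rightarrow> (real \<Rightarrow> real) \<Rightarrow> bool" where
  "H2_punct_with f h \<longleftrightarrow> L2_on (- {0}) f \<and> L2_on (- {0}) h \<and>
     (\<exists>g. L2_on (- {0}) g \<and> weak_deriv (- {0}) f g \<and> weak_deriv (- {0}) g h)"

definition Q :: "real \<Rightarrow> real \<Rightarrow> real \<Rightarrow> real \<Rightarrow> real" where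
  "Q p \<omega> \<gamma> x = ((p + 1) * \<omega> / 2 *
      (1 / cosh ((p - 1) * sqrt \<omega> / 2 * \<bar>x\<bar> + artanh (\<gamma> / (2 * sqrt \<omega>))))\<^sup>2)
      powr (1 / (p - 1))"

text \<open>Membership in D_even, for the continuous representative f (values at 0 meaningful).
  f'(0+), f'(0-) are the one-sided derivatives of this representative at 0.\<close>
definition D_even :: "real \<Rightarrow> (real \<Rightarrow> real) \<Rightarrow> bool" where
  "D_even \<gamma> f \<longleftrightarrow> continuous_on UNIV f \<and> (\<forall>x. f (- x) = f x) \<and> H1 f \<and>
     (\<exists>h. H2_punct_with f h) \<and>
     (\<exists>a b. (f has_real_derivative a) (at_right 0) \<and> (f has_real_derivative b) (at_left 0)
            \<and> a - b = - \<gamma> * f 0)"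

definition Lplus_eq :: "real \<Rightarrow> real \<Rightarrow> real \<Rightarrow> (real \<Rightarrow> real) \<Rightarrow> (real \<Rightarrow> real) \<Rightarrow> bool" where
  "Lplus_eq p \<omega> \<gamma> f k \<longleftrightarrow> (\<exists>h. H2_punct_with f h \<and>
     (AE x in lborel. x \<noteq> 0 \<longrightarrow>
        - h x + \<omega> * f x - p * (Q p \<omega> \<gamma> x) powr (p - 1) * f x = k x))"

definition Lminus_eq :: "real \<Rightarrow> real \<Rightarrow> real \<Rightarrow> (real \<Rightarrow> real) \<Rightarrow> (real \<Rightarrow> real) \<Rightarrow> bool" where
  "Lminus_eq p \<omega> \<gamma> f k \<longleftrightarrow> (\<exists>h. H2_punct_with f h \<and>
     (AE x in lborel. x \<noteq> 0 \<longrightarrow>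
        - h x + \<omega> * f x - (Q p \<omega> \<gamma> x) powr (p - 1) * f x = k x))"

end

theory Submission
  imports Defs "HOL-Computational_Algebra.Polynomial" "HOL-Real_Asymp.Real_Asymp"
begin

text \<open>Away from the origin the eigenvalue equations say, in the sense of distributions, that
  \<open>Y\<^sub>1''\<close> and \<open>Y\<^sub>2''\<close> are continuous functions. Testing against second differences of a bump shows
  that \<open>Y\<^sub>i\<close> minus a double primitive of the right-hand side is affine, so \<open>Y\<^sub>i\<close> is \<open>C\<^sup>2\<close> there with
  \<open>Y\<^sub>1'' = (\<omega> - p V) Y\<^sub>1 - e Y\<^sub>2\<close> and \<open>Y\<^sub>2'' = (\<omega> - V) Y\<^sub>2 + e Y\<^sub>1\<close>, where
  \<open>V = Q\<^sup>p\<^sup>-\<^sup>1 = A sech\<^sup>2(b\<bar>x\<bar> + c)\<close>. As \<open>sech\<close>, \<open>tanh\<close> and \<open>sgn\<close> have derivatives polynomial in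
  themselves away from 0, every derivative of \<open>Y\<^sub>i\<close> lies in the module generated by
  \<open>Y\<^sub>1, Y\<^sub>2, Y\<^sub>1', Y\<^sub>2'\<close> over the algebra generated by all seven functions; in particular \<open>Y\<^sub>i\<close> is smooth
  on \<open>\<real> - {0}\<close>.

  For decay, \<open>u = Y\<^sub>1\<^sup>2 + Y\<^sub>2\<^sup>2\<close> is integrable and satisfies \<open>u'' \<ge> \<omega> u\<close> for large \<open>x\<close>, so a maximum
  principle gives \<open>u \<le> M e\<^sup>-\<^sup>\<surd>\<^sup>\<omega>\<^sup>x\<close>; a bounded function with exponentially small second derivative has
  exponentially small first derivative, so \<open>Y\<^sub>i'\<close> decays as well, and by evenness the same holds as
  \<open>x \<rightarrow> -\<infinity>\<close>. A cut-off \<open>\<phi> \<in> BC\<^sup>\<infinity>\<^sub>0\<close> vanishes near 0, so by Leibniz every derivative of \<open>\<phi> Y\<^sub>i\<close> is a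
  sum of bounded functions times exponentially decaying ones.\<close>

section \<open>Classes of functions closed under differentiation\<close>

lemma has_real_derivative_0_if_locally_0:
  assumes "open S" "x \<in> S" "\<And>y. y \<in> S \<Longrightarrow> f y = 0"
  shows "(f has_real_derivative 0) (at x)"
proof -
  have "((\<lambda>x. 0) has_real_derivative 0) (at x)" by simp
  then show ?thesis by (rule has_field_derivative_transform_within_open[OF _ assms(1,2)]) (use assms(3) in auto)
qed

lemma higher_deriv_eq_0_on_interval:
  fixes \<phi> :: "real \<Rightarrow> real"
  assumes "\<forall>x\<in>{a<..<b}. \<phi> x = 0"
  shows "\<forall>x\<in>{a<..<b}. (deriv ^^ n) \<phi> x = 0"
proof (induction n)
  case 0 then show ?case using assms by simp
next
  case (Suc n)
  show ?case
  proof
    fix x assume x: "x \<in> {a<..<b}"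
    have "((deriv ^^ n) \<phi> has_real_derivative 0) (at x)"
      by (rule has_real_derivative_0_if_locally_0[of "{a<..<b}"]) (use x Suc in auto)
    then show "(deriv ^^ Suc n) \<phi> x = 0" by (simp add: DERIV_imp_deriv)
  qed
qed

lemma smooth_on_has_higher_deriv:
  assumes "smooth_on U f" "x \<in> U"
  shows "((deriv ^^ n) f has_real_derivative (deriv ^^ Suc n) f x) (at x)"
proof -
  have "(deriv ^^ n) f differentiable (at x)" using assms unfolding smooth_on_def by blast
  then show ?thesis by (simp add: DERIV_deriv_iff_real_differentiable)
qed

lemma smooth_on_deriv: "smooth_on U f \<Longrightarrow> smooth_on U (deriv f)"
proof -
  assume "smooth_on U f"
  moreover have "(deriv ^^ k) (deriv f) = (deriv ^^ Suc k) f" for k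
    by (simp only: funpow_Suc_right comp_def)
  ultimately show ?thesis unfolding smooth_on_def by metis
qed

definition deriv_closed_on :: "real set \<Rightarrow> (real \<Rightarrow> real) set \<Rightarrow> bool" where
  "deriv_closed_on U T \<longleftrightarrow> (\<forall>t\<in>T. \<exists>t'\<in>T. \<forall>x\<in>U. (t has_real_derivative t' x) (at x))"

lemma deriv_closed_on_higher_deriv:
  assumes "open U" "deriv_closed_on U T" "f \<in> T"
  shows "\<exists>t\<in>T. \<forall>x\<in>U. (deriv ^^ n) f x = t x"
proof (induction n)
  case 0 then show ?case using assms by auto
next
  case (Suc n)
  then obtain t where t: "t \<in> T" "\<And>x. x\<in>U \<Longrightarrow> (deriv ^^ n) f x = t x" by auto
  then obtain t' where t': "t' \<in> T" "\<And>x. x\<in>U \<Longrightarrow> (t has_real_derivative t' x) (at x)"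
    using assms(2) unfolding deriv_closed_on_def by blast
  have "(deriv ^^ Suc n) f x = t' x" if "x \<in> U" for x
  proof -
    have "((deriv ^^ n) f has_real_derivative t' x) (at x)"
      using has_field_derivative_transform_within_open[OF t'(2)[OF that] assms(1) that] t(2) by metis
    then show ?thesis by (simp add: DERIV_imp_deriv)
  qed
  then show ?case using t' by blast
qed

lemma smooth_on_if_deriv_closed_on:
  assumes "open U" "deriv_closed_on U T" "f \<in> T"
  shows "smooth_on U f"
  unfolding smooth_on_def
proof (intro allI ballI)
  fix k x assume x: "x \<in> U"
  obtain t where t: "t \<in> T" "\<And>x. x\<in>U \<Longrightarrow> (deriv ^^ k) f x = t x"
    using deriv_closed_on_higher_deriv[OF assms] by blast
  then obtain t' where t': "\<And>x. x\<in>U \<Longrightarrow> (t has_real_derivative t' x) (at x)"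
    using assms(2) unfolding deriv_closed_on_def by blast
  have "((deriv ^^ k) f has_real_derivative t' x) (at x)"
    using has_field_derivative_transform_within_open[OF t'[OF x] assms(1) x] t(2) by metis
  then show "(deriv ^^ k) f differentiable at x"
    using real_differentiable_def by blast
qed

lemma deriv_closed_on_insert:
  assumes "deriv_closed_on U T" "t \<in> T" "\<And>x. x \<in> U \<Longrightarrow> (f has_real_derivative t x) (at x)"
  shows "deriv_closed_on U (insert f T)"
  using assms unfolding deriv_closed_on_def by blast

inductive_set fun_alg :: "(real \<Rightarrow> real) set \<Rightarrow> (real \<Rightarrow> real) set" for T where
  generator: "t \<in> T \<Longrightarrow> t \<in> fun_alg T"
| const: "(\<lambda>x. c) \<in> fun_alg T"
| add: "f \<in> fun_alg T \<Longrightarrow> g \<in> fun_alg T \<Longrightarrow> (\<lambda>x. f x + g x) \<in> fun_alg T"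
| mult: "f \<in> fun_alg T \<Longrightarrow> g \<in> fun_alg T \<Longrightarrow> (\<lambda>x. f x * g x) \<in> fun_alg T"

lemma fun_alg_cmult: "f \<in> fun_alg T \<Longrightarrow> (\<lambda>x. c * f x) \<in> fun_alg T"
  by (rule fun_alg.mult[OF fun_alg.const])

lemma fun_alg_diff: "f \<in> fun_alg T \<Longrightarrow> g \<in> fun_alg T \<Longrightarrow> (\<lambda>x. f x - g x) \<in> fun_alg T"
  using fun_alg.add[OF _ fun_alg_cmult[of g T "-1"], of f] by simp

lemma deriv_closed_on_fun_alg:
  assumes "\<And>t. t \<in> T \<Longrightarrow> \<exists>t'\<in>fun_alg T. \<forall>x\<in>U. (t has_real_derivative t' x) (at x)"
  shows "deriv_closed_on U (fun_alg T)"
  unfolding deriv_closed_on_def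
proof
  fix f assume "f \<in> fun_alg T"
  then show "\<exists>t'\<in>fun_alg T. \<forall>x\<in>U. (f has_real_derivative t' x) (at x)"
  proof induction
    case (generator t) then show ?case using assms by blast
  next
    case (const c) then show ?case by (intro bexI[of _ "\<lambda>x. 0"]) (auto intro: fun_alg.const)
  next
    case (add f g)
    then obtain f' g' where "f' \<in> fun_alg T" "g' \<in> fun_alg T"
      "\<forall>x\<in>U. (f has_real_derivative f' x) (at x)" "\<forall>x\<in>U. (g has_real_derivative g' x) (at x)"
      by blast
    then show ?case
      by (intro bexI[of _ "\<lambda>x. f' x + g' x"]) (auto intro!: derivative_eq_intros fun_alg.add)
  next
    case (mult f g)
    then obtain f' g' where "f' \<in> fun_alg T" "g' \<in> fun_alg T"
      "\<forall>x\<in>U. (f has_real_derivative f' x) (at x)" "\<forall>x\<in>U. (g has_real_derivative g' x) (at x)"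
      by blast
    then show ?case
      by (intro bexI[of _ "\<lambda>x. f' x * g x + f x * g' x"])
         (auto intro!: derivative_eq_intros fun_alg.add fun_alg.mult mult.hyps)
  qed
qed

lemma bounded_fun_alg:
  assumes "\<And>g. g \<in> G \<Longrightarrow> \<exists>B. \<forall>x\<in>S. \<bar>g x\<bar> \<le> B"
  shows "r \<in> fun_alg G \<Longrightarrow> \<exists>B. \<forall>x\<in>S. \<bar>r x\<bar> \<le> B"
proof (induction rule: fun_alg.induct)
  case (generator t) then show ?case using assms by blast
next
  case (const c) then show ?case by (intro exI[of _ "\<bar>c\<bar>"]) auto
next
  case (add f g)
  then obtain B1 B2 where "\<forall>x\<in>S. \<bar>f x\<bar> \<le> B1" "\<forall>x\<in>S. \<bar>g x\<bar> \<le> B2" by blast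
  then show ?case by (intro exI[of _ "B1 + B2"]) (auto intro: abs_triangle_ineq[THEN order_trans] add_mono)
next
  case (mult f g)
  then obtain B1 B2 where b: "\<forall>x\<in>S. \<bar>f x\<bar> \<le> B1" "\<forall>x\<in>S. \<bar>g x\<bar> \<le> B2" by blast
  show ?case
  proof (intro exI[of _ "B1 * B2"] ballI)
    fix x assume "x \<in> S"
    then have "\<bar>f x\<bar> \<le> B1" "\<bar>g x\<bar> \<le> B2" using b by auto
    then show "\<bar>f x * g x\<bar> \<le> B1 * B2" by (simp add: abs_mult mult_mono')
  qed
qed

lemma fun_alg_mono: "f \<in> fun_alg T \<Longrightarrow> T \<subseteq> S \<Longrightarrow> f \<in> fun_alg S"
  by (induction rule: fun_alg.induct) (auto intro: fun_alg.intros)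

definition affine_rescalings :: "(real \<Rightarrow> real) set \<Rightarrow> (real \<Rightarrow> real) set" where
  "affine_rescalings T = {(\<lambda>x. c * t (a * x + b)) | c a b t. t \<in> T}"

lemma affine_rescalingsI: "t \<in> T \<Longrightarrow> (\<lambda>x. c * t (a * x + b)) \<in> affine_rescalings T"
  unfolding affine_rescalings_def by blast

lemma deriv_closed_affine_rescalings:
  assumes "deriv_closed_on UNIV T"
  shows "deriv_closed_on UNIV (affine_rescalings T)"
  unfolding deriv_closed_on_def affine_rescalings_def
proof safe
  fix c a b t assume t: "t \<in> T"
  then obtain t' where t': "t' \<in> T" "\<And>x. (t has_real_derivative t' x) (at x)"
    using assms unfolding deriv_closed_on_def by blast
  have D: "((\<lambda>x. c * t (a * x + b)) has_real_derivative (c * a) * t' (a * x + b)) (at x)" for x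
  proof -
    have "((\<lambda>x. a*x+b) has_real_derivative a) (at x)" by (auto intro!: derivative_eq_intros)
    from DERIV_cmult[OF DERIV_chain2[OF t'(2) this], of c] show ?thesis by (simp add: algebra_simps)
  qed
  have mem: "(\<lambda>x. (c * a) * t' (a * x + b)) \<in> {(\<lambda>x. c * t (a * x + b)) | c a b t. t \<in> T}"
    using t'(1) by blast
  show "\<exists>t''\<in>{(\<lambda>x. c * t (a * x + b)) | c a b t. t \<in> T}.
       \<forall>x\<in>UNIV. ((\<lambda>x. c * t (a * x + b)) has_real_derivative t'' x) (at x)"
    by (rule bexI[OF _ mem]) (use D in simp)
qed

lemma deriv_closed_fun_alg_affine_rescalings:
  assumes "deriv_closed_on UNIV T"
  shows "deriv_closed_on UNIV (fun_alg (affine_rescalings T))"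
proof (rule deriv_closed_on_fun_alg)
  fix t assume "t \<in> affine_rescalings T"
  then show "\<exists>t'\<in>fun_alg (affine_rescalings T). \<forall>x\<in>UNIV. (t has_real_derivative t' x) (at x)"
    using deriv_closed_affine_rescalings[OF assms] unfolding deriv_closed_on_def by (meson fun_alg.generator)
qed

inductive_set fun_module :: "(real \<Rightarrow> real) set \<Rightarrow> (real \<Rightarrow> real) set \<Rightarrow> (real \<Rightarrow> real) set"
  for R G where
  generator: "g \<in> G \<Longrightarrow> g \<in> fun_module R G"
| scale: "r \<in> R \<Longrightarrow> f \<in> fun_module R G \<Longrightarrow> (\<lambda>x. r x * f x) \<in> fun_module R G"
| add: "f \<in> fun_module R G \<Longrightarrow> g \<in> fun_module R G \<Longrightarrow> (\<lambda>x. f x + g x) \<in> fun_module R G"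

lemma deriv_closed_on_fun_module:
  assumes R: "deriv_closed_on U R"
    and G: "\<And>g. g \<in> G \<Longrightarrow> \<exists>f\<in>fun_module R G. \<forall>x\<in>U. (g has_real_derivative f x) (at x)"
  shows "deriv_closed_on U (fun_module R G)"
  unfolding deriv_closed_on_def
proof
  fix f assume "f \<in> fun_module R G"
  then show "\<exists>f'\<in>fun_module R G. \<forall>x\<in>U. (f has_real_derivative f' x) (at x)"
  proof induction
    case (generator g) then show ?case using G by blast
  next
    case (scale r f)
    obtain r' where r': "r' \<in> R" "\<forall>x\<in>U. (r has_real_derivative r' x) (at x)"
      using R scale.hyps(1) unfolding deriv_closed_on_def by blast
    obtain f' where f': "f' \<in> fun_module R G" "\<forall>x\<in>U. (f has_real_derivative f' x) (at x)"
      using scale.IH by blast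
    have "(\<lambda>x. (\<lambda>x. r' x * f x) x + (\<lambda>x. r x * f' x) x) \<in> fun_module R G"
      by (intro fun_module.add fun_module.scale r' f' scale.hyps)
    then show ?case using r' f'
      by (intro bexI[of _ "\<lambda>x. r' x * f x + r x * f' x"]) (auto intro!: derivative_eq_intros)
  next
    case (add f g)
    then obtain f' g' where "f' \<in> fun_module R G" "g' \<in> fun_module R G"
      "\<forall>x\<in>U. (f has_real_derivative f' x) (at x)" "\<forall>x\<in>U. (g has_real_derivative g' x) (at x)"
      by blast
    then show ?case
      by (intro bexI[of _ "\<lambda>x. f' x + g' x"]) (auto intro!: derivative_eq_intros fun_module.add)
  qed
qed

lemma power_weighted_bound_fun_module:
  assumes R: "\<And>r. r \<in> R \<Longrightarrow> \<exists>B. \<forall>x\<in>S. \<bar>r x\<bar> \<le> B"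
    and G: "\<And>g j. g \<in> G \<Longrightarrow> \<exists>C. \<forall>x\<in>S. \<bar>x ^ j * g x\<bar> \<le> C"
  shows "f \<in> fun_module R G \<Longrightarrow> \<exists>C. \<forall>x\<in>S. \<bar>x ^ j * f x\<bar> \<le> C"
proof (induction rule: fun_module.induct)
  case (generator g) then show ?case using G by blast
next
  case (scale r f)
  obtain B where B: "\<forall>x\<in>S. \<bar>r x\<bar> \<le> B" using R scale.hyps(1) by blast
  obtain C where C: "\<forall>x\<in>S. \<bar>x ^ j * f x\<bar> \<le> C" using scale.IH by blast
  show ?case
  proof (intro exI[of _ "B * C"] ballI)
    fix x assume "x \<in> S"
    then have "\<bar>r x\<bar> * \<bar>x ^ j * f x\<bar> \<le> B * C" using B C by (simp add: mult_mono')
    then show "\<bar>x ^ j * (r x * f x)\<bar> \<le> B * C" by (simp add: abs_mult algebra_simps)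
  qed
next
  case (add f g)
  then obtain C1 C2 where "\<forall>x\<in>S. \<bar>x ^ j * f x\<bar> \<le> C1" "\<forall>x\<in>S. \<bar>x ^ j * g x\<bar> \<le> C2" by blast
  then show ?case
    by (intro exI[of _ "C1 + C2"]) (auto simp: distrib_left intro: abs_triangle_ineq[THEN order_trans] add_mono)
qed

text \<open>By Leibniz' rule this contains all derivatives of \<open>\<phi> f\<close> for \<open>f \<in> I\<close>.\<close>

inductive_set cutoff_span :: "(real \<Rightarrow> real) \<Rightarrow> (real \<Rightarrow> real) set \<Rightarrow> (real \<Rightarrow> real) set"
  for \<phi> I where
  generator: "f \<in> I \<Longrightarrow> (\<lambda>x. (deriv ^^ n) \<phi> x * f x) \<in> cutoff_span \<phi> I"
| add: "f \<in> cutoff_span \<phi> I \<Longrightarrow> g \<in> cutoff_span \<phi> I \<Longrightarrow> (\<lambda>x. f x + g x) \<in> cutoff_span \<phi> I"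

lemma deriv_closed_cutoff_span:
  assumes sm: "smooth_on UNIV \<phi>" and ab: "a < 0" "0 < b" and van: "\<forall>x\<in>{a<..<b}. \<phi> x = 0"
    and I: "deriv_closed_on (- {0}) I"
  shows "deriv_closed_on UNIV (cutoff_span \<phi> I)"
  unfolding deriv_closed_on_def
proof
  fix f assume "f \<in> cutoff_span \<phi> I"
  then show "\<exists>f'\<in>cutoff_span \<phi> I. \<forall>x\<in>UNIV. (f has_real_derivative f' x) (at x)"
  proof induction
    case (generator f n)
    obtain f' where f': "f' \<in> I" "\<forall>x\<in>- {0}. (f has_real_derivative f' x) (at x)"
      using I generator.hyps unfolding deriv_closed_on_def by blast
    let ?g = "\<lambda>x. (deriv ^^ Suc n) \<phi> x * f x + (deriv ^^ n) \<phi> x * f' x"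
    have mem: "?g \<in> cutoff_span \<phi> I"
      using cutoff_span.add[OF cutoff_span.generator[OF generator.hyps, of "Suc n"]
          cutoff_span.generator[OF f'(1), of n]] by simp
    have D: "((\<lambda>x. (deriv ^^ n) \<phi> x * f x) has_real_derivative ?g x) (at x)" for x
    proof (cases "x \<in> {a<..<b}")
      case True
      have v: "\<forall>x\<in>{a<..<b}. (deriv ^^ m) \<phi> x = 0" for m by (rule higher_deriv_eq_0_on_interval[OF van])
      have "((\<lambda>x. (deriv ^^ n) \<phi> x * f x) has_real_derivative 0) (at x)"
        by (rule has_real_derivative_0_if_locally_0[of "{a<..<b}"]) (use True v in auto)
      moreover have "?g x = 0" using v[of n] v[of "Suc n"] True by simp
      ultimately show ?thesis by simp
    next
      case False
      then have "(f has_real_derivative f' x) (at x)" using f' ab by auto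
      from DERIV_mult[OF smooth_on_has_higher_deriv[OF sm] this] show ?thesis by (simp add: mult.commute)
    qed
    show ?case by (rule bexI[OF _ mem]) (use D in blast)
  next
    case (add f g)
    then obtain f' g' where "f' \<in> cutoff_span \<phi> I" "g' \<in> cutoff_span \<phi> I"
      "\<forall>x\<in>UNIV. (f has_real_derivative f' x) (at x)" "\<forall>x\<in>UNIV. (g has_real_derivative g' x) (at x)"
      by blast
    then show ?case
      by (intro bexI[of _ "\<lambda>x. f' x + g' x"]) (auto intro!: derivative_eq_intros cutoff_span.add)
  qed
qed

lemma power_weighted_bound_cutoff_span:
  assumes bd: "\<And>k. \<exists>C. \<forall>x. \<bar>(deriv ^^ k) \<phi> x\<bar> \<le> C"
    and ab: "a < 0" "0 < b" and van: "\<forall>x\<in>{a<..<b}. \<phi> x = 0"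
    and I: "\<And>f j. f \<in> I \<Longrightarrow> \<exists>C. \<forall>x. \<bar>x\<bar> \<ge> min (-a) b \<longrightarrow> \<bar>x ^ j * f x\<bar> \<le> C"
  shows "g \<in> cutoff_span \<phi> I \<Longrightarrow> \<exists>C. \<forall>x. \<bar>x ^ j * g x\<bar> \<le> C"
proof (induction rule: cutoff_span.induct)
  case (generator f n)
  obtain B where B: "\<forall>x. \<bar>(deriv ^^ n) \<phi> x\<bar> \<le> B" using bd by blast
  obtain C where C: "\<forall>x. \<bar>x\<bar> \<ge> min (-a) b \<longrightarrow> \<bar>x ^ j * f x\<bar> \<le> C" using I generator.hyps by blast
  have B0: "B \<ge> 0" using B[rule_format, of 0] by linarith
  have C0: "C \<ge> 0" using C[rule_format, of "min (-a) b"] ab by (auto intro: order_trans[OF abs_ge_zero])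
  show ?case
  proof (intro exI[of _ "B * C"] allI)
    fix x
    show "\<bar>x ^ j * ((deriv ^^ n) \<phi> x * f x)\<bar> \<le> B * C"
    proof (cases "\<bar>x\<bar> \<ge> min (-a) b")
      case True
      then have "\<bar>(deriv ^^ n) \<phi> x\<bar> * \<bar>x ^ j * f x\<bar> \<le> B * C"
        using B C by (simp add: mult_mono')
      then show ?thesis by (simp add: abs_mult algebra_simps)
    next
      case False
      then have "x \<in> {a<..<b}" by auto
      then have "(deriv ^^ n) \<phi> x = 0" using higher_deriv_eq_0_on_interval[OF van] by blast
      then show ?thesis using B0 C0 by simp
    qed
  qed
next
  case (add f g)
  then obtain C1 C2 where "\<forall>x. \<bar>x ^ j * f x\<bar> \<le> C1" "\<forall>x. \<bar>x ^ j * g x\<bar> \<le> C2" by blast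
  then show ?case
    by (intro exI[of _ "C1 + C2"]) (auto simp: distrib_left intro: abs_triangle_ineq[THEN order_trans] add_mono)
qed

section \<open>A smooth bump and its primitives\<close>

lemma tendsto_power_poly_exp_neg_at_top: "((\<lambda>y::real. y ^ n * poly P y * exp (- y)) \<longlongrightarrow> 0) at_top"
proof (induction P arbitrary: n rule: pCons_induct)
  case 0 then show ?case by simp
next
  case (pCons a P)
  have "(\<lambda>y::real. y ^ n * poly (pCons a P) y * exp (- y)) =
      (\<lambda>y. a * (y ^ n * exp (- y)) + y ^ Suc n * poly P y * exp (- y))"
    by (auto simp: algebra_simps)
  moreover have "((\<lambda>y::real. y ^ n * exp (- y)) \<longlongrightarrow> 0) at_top" by real_asymp
  ultimately show ?case using tendsto_add[OF tendsto_mult_right_zero pCons.IH[of "Suc n"]] by simp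
qed

lemma tendsto_poly_inverse_exp_at_right_0:
  "((\<lambda>x::real. poly P (1/x) * exp (- (1/x))) \<longlongrightarrow> 0) (at_right 0)"
proof -
  have "((\<lambda>y::real. poly P y * exp (- y)) \<longlongrightarrow> 0) at_top"
    using tendsto_power_poly_exp_neg_at_top[of 0 P] by simp
  from filterlim_compose[OF this filterlim_inverse_at_top_right]
  show ?thesis by (simp add: inverse_eq_divide o_def)
qed

text \<open>The functions \<open>P(1/x) e\<^sup>-\<^sup>1\<^sup>/\<^sup>x\<close>, extended by \<open>0\<close> to \<open>x \<le> 0\<close>, form a class closed under
  differentiation; this is how the smoothness of the bump is obtained.\<close>

definition exp_inv_poly :: "real poly \<Rightarrow> real \<Rightarrow> real" where
  "exp_inv_poly P x = (if x > 0 then poly P (1/x) * exp (- (1/x)) else 0)"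

definition exp_inv_poly_dpoly :: "real poly \<Rightarrow> real poly" where
  "exp_inv_poly_dpoly P = [:0,0,1:] * (P - pderiv P)"

lemma has_real_derivative_exp_inv_poly_pos:
  assumes "x > 0"
  shows "((\<lambda>x. poly P (1/x) * exp (- (1/x))) has_real_derivative
           exp_inv_poly (exp_inv_poly_dpoly P) x) (at x)"
proof -
  have d1: "((\<lambda>x. 1/x) has_real_derivative - (1/x^2)) (at x)"
    using assms by (auto intro!: derivative_eq_intros simp: power2_eq_square field_simps)
  have d2: "((\<lambda>x. poly P (1/x)) has_real_derivative poly (pderiv P) (1/x) * - (1/x^2)) (at x)"
    using DERIV_chain2[OF poly_DERIV d1] .
  have d3: "((\<lambda>x. exp (- (1/x))) has_real_derivative exp (- (1/x)) * (1/x^2)) (at x)"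
    using DERIV_chain2[OF DERIV_exp DERIV_minus[OF d1]] by simp
  have "poly (pderiv P) (1/x) * - (1/x^2) * exp (- (1/x)) + exp (- (1/x)) * (1/x^2) * poly P (1/x)
      = exp_inv_poly (exp_inv_poly_dpoly P) x"
    using assms by (simp add: exp_inv_poly_def exp_inv_poly_dpoly_def algebra_simps power2_eq_square)
  then show ?thesis by (rule DERIV_cong[OF DERIV_mult[OF d2 d3]])
qed

lemma has_real_derivative_exp_inv_poly:
  "(exp_inv_poly P has_real_derivative exp_inv_poly (exp_inv_poly_dpoly P) x) (at x)"
proof (cases "x = 0")
  case True
  have "((\<lambda>h. (exp_inv_poly P (0 + h) - exp_inv_poly P 0) / h) \<longlongrightarrow> 0) (at 0)"
  proof (rule filterlim_split_at)
    have "eventually (\<lambda>h::real. h < 0) (at_left 0)" by (auto simp: eventually_at_filter)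
    then have "eventually (\<lambda>h. (exp_inv_poly P (0 + h) - exp_inv_poly P 0) / h = 0) (at_left 0)"
      by eventually_elim (auto simp: exp_inv_poly_def)
    then show "((\<lambda>h. (exp_inv_poly P (0 + h) - exp_inv_poly P 0) / h) \<longlongrightarrow> 0) (at_left 0)"
      by (rule tendsto_eventually)
    have "eventually (\<lambda>h::real. h > 0) (at_right 0)" by (auto simp: eventually_at_filter)
    then have "eventually (\<lambda>h. poly (pCons 0 P) (1/h) * exp (- (1/h)) =
        (exp_inv_poly P (0 + h) - exp_inv_poly P 0) / h) (at_right 0)"
      by eventually_elim (auto simp: exp_inv_poly_def)
    with tendsto_poly_inverse_exp_at_right_0[of "pCons 0 P"]
    show "((\<lambda>h. (exp_inv_poly P (0 + h) - exp_inv_poly P 0) / h) \<longlongrightarrow> 0) (at_right 0)"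
      by (rule tendsto_cong[THEN iffD1, rotated])
  qed
  then show ?thesis using True by (simp add: DERIV_def exp_inv_poly_def)
next
  case False
  then consider "x > 0" | "x < 0" by linarith
  then show ?thesis
  proof cases
    case 1
    show ?thesis
      by (rule has_field_derivative_transform_within_open[OF has_real_derivative_exp_inv_poly_pos[OF 1],
            of "{0<..}"]) (use 1 in \<open>auto simp: exp_inv_poly_def\<close>)
  next
    case 2
    have "(exp_inv_poly P has_real_derivative 0) (at x)"
      by (rule has_real_derivative_0_if_locally_0[of "{..<0}"]) (use 2 in \<open>auto simp: exp_inv_poly_def\<close>)
    then show ?thesis using 2 by (simp add: exp_inv_poly_def)
  qed
qed

lemma deriv_closed_exp_inv_poly: "deriv_closed_on UNIV (range exp_inv_poly)"
  unfolding deriv_closed_on_def using has_real_derivative_exp_inv_poly by blast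

definition bump :: "real \<Rightarrow> real" where
  "bump x = exp_inv_poly 1 (1 + x) * exp_inv_poly 1 (1 - x)"

lemma bump_eq: "bump x = (if \<bar>x\<bar> < 1 then exp (- (1/(1 + x))) * exp (- (1/(1 - x))) else 0)"
  by (auto simp: bump_def exp_inv_poly_def)

lemma bump_in_fun_alg: "bump \<in> fun_alg (affine_rescalings (range exp_inv_poly))"
proof -
  have "(\<lambda>x. 1 * exp_inv_poly 1 (a * x + 1)) \<in> affine_rescalings (range exp_inv_poly)" for a
    by (rule affine_rescalingsI) simp
  from fun_alg.mult[OF fun_alg.generator[OF this[of 1]] fun_alg.generator[OF this[of "-1"]]]
  show ?thesis unfolding bump_def[abs_def] by (simp add: add.commute)
qed

lemma continuous_on_bump: "continuous_on UNIV bump"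
proof -
  obtain b' where "\<forall>x. (bump has_real_derivative b' x) (at x)"
    using deriv_closed_fun_alg_affine_rescalings[OF deriv_closed_exp_inv_poly] bump_in_fun_alg
    unfolding deriv_closed_on_def by blast
  then show ?thesis by (meson DERIV_continuous continuous_at_imp_continuous_on)
qed

lemma bump_nonneg: "bump x \<ge> 0"
  by (simp add: bump_eq)

lemma bump_eq_0: "\<bar>x\<bar> \<ge> 1 \<Longrightarrow> bump x = 0"
  by (simp add: bump_eq)

lemma bump_lower_bound: "\<bar>x\<bar> \<le> 1/2 \<Longrightarrow> bump x \<ge> exp (-4)"
proof -
  assume a: "\<bar>x\<bar> \<le> 1/2"
  then have "1/(1+x) \<le> 2" "1/(1-x) \<le> 2" by (auto simp: field_simps)
  then have "exp (-4) \<le> exp (- (1/(1+x))) * exp (- (1/(1-x)))"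
    by (simp add: exp_add[symmetric])
  then show ?thesis using a by (simp add: bump_eq)
qed

lemma has_real_derivative_integral_vanishing_left:
  fixes g :: "real \<Rightarrow> real"
  assumes g: "continuous_on UNIV g" and z: "\<And>x. x \<le> a \<Longrightarrow> g x = 0"
  shows "((\<lambda>x. integral {a-1..x} g) has_real_derivative g x) (at x)"
proof (cases "x < a")
  case True
  have "((\<lambda>x. integral {a-1..x} g) has_real_derivative 0) (at x)"
  proof (rule has_real_derivative_0_if_locally_0[of "{..<a}"])
    fix y :: real assume "y \<in> {..<a}"
    then have "integral {a-1..y} g = integral {a-1..y} (\<lambda>_. 0)"
      by (intro integral_cong) (auto intro: z)
    then show "integral {a-1..y} g = 0" by simp
  qed (use True in auto)
  then show ?thesis using True z by simp
next
  case False
  have "((\<lambda>x. integral {a-1..x} g) has_real_derivative g x) (at x within {a-1..x+1})"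
    by (rule integral_has_real_derivative) (use False g in \<open>auto intro: continuous_on_subset\<close>)
  moreover have "at x within {a-1..x+1} = at x"
    by (rule at_within_interior) (use False in auto)
  ultimately show ?thesis by simp
qed

lemma integral_vanishing_left_eq_0:
  fixes g :: "real \<Rightarrow> real"
  assumes z: "\<And>x. x \<le> a \<Longrightarrow> g x = 0" and "x \<le> a"
  shows "integral {a-1..x} g = 0"
proof -
  have "integral {a-1..x} g = integral {a-1..x} (\<lambda>_. 0)"
    by (intro integral_cong) (use assms in auto)
  then show ?thesis by simp
qed

definition bump_int :: "real \<Rightarrow> real" where "bump_int x = integral {-2..x} bump"
definition bump_int2 :: "real \<Rightarrow> real" where "bump_int2 x = integral {-2..x} bump_int"
definition bump_mass :: real where "bump_mass = bump_int 1"

lemma has_real_derivative_bump_int: "(bump_int has_real_derivative bump x) (at x)"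
  using has_real_derivative_integral_vanishing_left[of bump "-1" x] continuous_on_bump bump_eq_0
  unfolding bump_int_def by force

lemma continuous_on_bump_int: "continuous_on UNIV bump_int"
  using has_real_derivative_bump_int by (meson DERIV_continuous continuous_at_imp_continuous_on)

lemma bump_int_eq_0: "x \<le> -1 \<Longrightarrow> bump_int x = 0"
  using integral_vanishing_left_eq_0[of "-1" bump x] bump_eq_0 unfolding bump_int_def by force

lemma bump_int_eq_mass: assumes "x \<ge> 1" shows "bump_int x = bump_mass"
proof -
  have "bump integrable_on {-2..x}"
    by (rule integrable_continuous_interval) (use continuous_on_bump continuous_on_subset in blast)
  then have "integral {-2..1} bump + integral {1..x} bump = integral {-2..x} bump"
    using Henstock_Kurzweil_Integration.integral_combine[where a="-2" and c=1 and b=x and f=bump] assms by auto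
  moreover have "integral {1..x} bump = integral {1..x} (\<lambda>_. 0)"
    by (intro integral_cong) (auto intro: bump_eq_0)
  ultimately show ?thesis by (simp add: bump_int_def bump_mass_def)
qed

lemma bump_mass_pos: "bump_mass > 0"
proof -
  have c: "continuous_on S bump" for S using continuous_on_bump continuous_on_subset by blast
  have "integral {-1/2..1/2::real} (\<lambda>_. exp (-4)) \<le> integral {-1/2..1/2} bump"
    by (rule integral_le) (auto intro!: integrable_continuous_interval c bump_lower_bound)
  also have "\<dots> \<le> integral {-2..1} bump"
    by (rule integral_subset_le) (auto intro!: integrable_continuous_interval c bump_nonneg)
  finally have "exp (-4) \<le> integral {-2..1} bump" by simp
  moreover have "exp (-4::real) > 0" by simp
  ultimately show ?thesis unfolding bump_mass_def bump_int_def by linarith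
qed

lemma has_real_derivative_bump_int2: "(bump_int2 has_real_derivative bump_int x) (at x)"
  using has_real_derivative_integral_vanishing_left[of bump_int "-1" x] continuous_on_bump_int bump_int_eq_0
  unfolding bump_int2_def by force

lemma bump_int2_eq_0: "x \<le> -1 \<Longrightarrow> bump_int2 x = 0"
  using integral_vanishing_left_eq_0[of "-1" bump_int x] bump_int_eq_0 unfolding bump_int2_def by force

lemma bump_int2_affine: assumes "x \<ge> 1" shows "bump_int2 x = bump_int2 1 + bump_mass * (x - 1)"
proof -
  have "bump_int integrable_on {-2..x}"
    by (rule integrable_continuous_interval) (use continuous_on_bump_int continuous_on_subset in blast)
  then have "integral {-2..1} bump_int + integral {1..x} bump_int = integral {-2..x} bump_int"
    using Henstock_Kurzweil_Integration.integral_combine[where a="-2" and c=1 and b=x and f=bump_int] assms by auto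
  moreover have "integral {1..x} bump_int = integral {1..x} (\<lambda>_. bump_mass)"
    by (intro integral_cong) (auto intro: bump_int_eq_mass)
  ultimately show ?thesis using assms by (simp add: bump_int2_def mult.commute)
qed

lemma smooth_on_bump_int2_rescalings:
  "f \<in> fun_alg (affine_rescalings {bump_int2}) \<Longrightarrow> smooth_on UNIV f"
proof -
  let ?T = "insert bump_int2 (insert bump_int (fun_alg (affine_rescalings (range exp_inv_poly))))"
  have "deriv_closed_on UNIV (insert bump_int (fun_alg (affine_rescalings (range exp_inv_poly))))"
    by (rule deriv_closed_on_insert[OF deriv_closed_fun_alg_affine_rescalings[OF deriv_closed_exp_inv_poly]
          bump_in_fun_alg]) (use has_real_derivative_bump_int in auto)
  then have "deriv_closed_on UNIV ?T"
    by (rule deriv_closed_on_insert) (use has_real_derivative_bump_int2 in auto)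
  then have "deriv_closed_on UNIV (fun_alg (affine_rescalings ?T))"
    by (rule deriv_closed_fun_alg_affine_rescalings)
  moreover assume "f \<in> fun_alg (affine_rescalings {bump_int2})"
  then have "f \<in> fun_alg (affine_rescalings ?T)"
    by (rule fun_alg_mono) (auto simp: affine_rescalings_def)
  ultimately show ?thesis by (rule smooth_on_if_deriv_closed_on[OF open_UNIV])
qed

section \<open>Distributional solutions of \<open>f'' = k\<close> are classical\<close>

lemma has_real_derivative_rescale:
  assumes "\<And>y. (f has_real_derivative f' y) (at y)" "e \<noteq> 0"
  shows "((\<lambda>x. f ((x - p) / e)) has_real_derivative f' ((x - p) / e) / e) (at x)"
proof -
  have "((\<lambda>x. (x - p) / e) has_real_derivative 1 / e) (at x)"
    using assms(2) by (auto intro!: derivative_eq_intros)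
  from DERIV_chain2[OF assms(1) this] show ?thesis by simp
qed

text \<open>The second derivative of \<open>three_point_test a b c e\<close> is the second difference
  \<open>(c - b) \<rho>\<^sub>a - (c - a) \<rho>\<^sub>b + (b - a) \<rho>\<^sub>c\<close> of bumps of width \<open>e\<close>, which annihilates affine
  functions; the test itself vanishes outside \<open>[a - e, c + e]\<close> because the weights and their first
  moments cancel.\<close>

definition three_point_test :: "real \<Rightarrow> real \<Rightarrow> real \<Rightarrow> real \<Rightarrow> real \<Rightarrow> real" where
  "three_point_test a b c e = (\<lambda>x. (c-b) * e\<^sup>2 * bump_int2 ((x - a) / e)
      - (c-a) * e\<^sup>2 * bump_int2 ((x - b) / e) + (b-a) * e\<^sup>2 * bump_int2 ((x - c) / e))"

definition three_point_test_d1 :: "real \<Rightarrow> real \<Rightarrow> real \<Rightarrow> real \<Rightarrow> real \<Rightarrow> real" where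
  "three_point_test_d1 a b c e = (\<lambda>x. (c-b) * e * bump_int ((x - a) / e)
      - (c-a) * e * bump_int ((x - b) / e) + (b-a) * e * bump_int ((x - c) / e))"

definition three_point_test_d2 :: "real \<Rightarrow> real \<Rightarrow> real \<Rightarrow> real \<Rightarrow> real \<Rightarrow> real" where
  "three_point_test_d2 a b c e = (\<lambda>x. (c-b) * bump ((x - a) / e)
      - (c-a) * bump ((x - b) / e) + (b-a) * bump ((x - c) / e))"

lemma has_real_derivative_three_point_test:
  assumes "e \<noteq> 0"
  shows "(three_point_test a b c e has_real_derivative three_point_test_d1 a b c e x) (at x)"
proof -
  have d: "((\<lambda>x. bump_int2 ((x - p) / e)) has_real_derivative bump_int ((x - p) / e) / e) (at x)" for p
    by (rule has_real_derivative_rescale[OF has_real_derivative_bump_int2 assms])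
  show ?thesis unfolding three_point_test_def three_point_test_d1_def
    by (rule DERIV_cong[OF DERIV_add[OF DERIV_diff[OF DERIV_cmult[OF d] DERIV_cmult[OF d]] DERIV_cmult[OF d]]])
       (use assms in \<open>simp add: power2_eq_square\<close>)
qed

lemma has_real_derivative_three_point_test_d1:
  assumes "e \<noteq> 0"
  shows "(three_point_test_d1 a b c e has_real_derivative three_point_test_d2 a b c e x) (at x)"
proof -
  have d: "((\<lambda>x. bump_int ((x - p) / e)) has_real_derivative bump ((x - p) / e) / e) (at x)" for p
    by (rule has_real_derivative_rescale[OF has_real_derivative_bump_int assms])
  show ?thesis unfolding three_point_test_d1_def three_point_test_d2_def
    by (rule DERIV_cong[OF DERIV_add[OF DERIV_diff[OF DERIV_cmult[OF d] DERIV_cmult[OF d]] DERIV_cmult[OF d]]])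
       (use assms in simp)
qed

lemma deriv_deriv_three_point_test:
  assumes "e \<noteq> 0"
  shows "deriv (deriv (three_point_test a b c e)) = three_point_test_d2 a b c e"
proof -
  have "deriv (three_point_test a b c e) = three_point_test_d1 a b c e"
    using has_real_derivative_three_point_test[OF assms] by (auto intro!: ext DERIV_imp_deriv)
  moreover have "deriv (three_point_test_d1 a b c e) = three_point_test_d2 a b c e"
    using has_real_derivative_three_point_test_d1[OF assms] by (auto intro!: ext DERIV_imp_deriv)
  ultimately show ?thesis by simp
qed

lemma continuous_on_bump_rescale: "continuous_on UNIV (\<lambda>x. bump ((x - p) / e))"
proof -
  have "continuous_on UNIV (\<lambda>x. bump ((x - p) * inverse e))"
    by (rule continuous_on_compose2[OF continuous_on_bump]) (auto intro!: continuous_intros)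
  then show ?thesis by (simp add: divide_inverse)
qed

lemma continuous_on_three_point_test_d2: "continuous_on UNIV (three_point_test_d2 a b c e)"
  unfolding three_point_test_d2_def by (intro continuous_intros continuous_on_bump_rescale)

lemma continuous_on_three_point_test: "e \<noteq> 0 \<Longrightarrow> continuous_on UNIV (three_point_test a b c e)"
  using has_real_derivative_three_point_test
  by (meson DERIV_continuous continuous_at_imp_continuous_on)

lemma smooth_on_three_point_test: "smooth_on UNIV (three_point_test a b c e)"
proof (rule smooth_on_bump_int2_rescalings)
  have "(\<lambda>x. C * bump_int2 ((x - p) / e)) \<in> fun_alg (affine_rescalings {bump_int2})" for C p
    using fun_alg.generator[OF affine_rescalingsI[of bump_int2 "{bump_int2}" C "1/e" "-p/e"]]
    by (cases "e = 0") (simp_all add: diff_divide_distrib)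
  from fun_alg.add[OF fun_alg_diff[OF this this] this]
  show "three_point_test a b c e \<in> fun_alg (affine_rescalings {bump_int2})"
    unfolding three_point_test_def by simp
qed

lemma three_point_test_eq_0:
  assumes "a < b" "b < c" "e > 0" "x \<le> a - e \<or> x \<ge> c + e"
  shows "three_point_test a b c e x = 0" "three_point_test_d1 a b c e x = 0"
proof -
  have "three_point_test a b c e x = 0 \<and> three_point_test_d1 a b c e x = 0"
  proof (cases "x \<le> a - e")
    case True
    then have "(x - p) / e \<le> -1" if "p \<ge> a" for p using that assms by (simp add: field_simps)
    then have "bump_int2 ((x - p) / e) = 0" "bump_int ((x - p) / e) = 0" if "p \<ge> a" for p
      using that bump_int2_eq_0 bump_int_eq_0 by blast+
    moreover have "a \<ge> a" "b \<ge> a" "c \<ge> a" using assms by auto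
    ultimately show ?thesis unfolding three_point_test_def three_point_test_d1_def by simp
  next
    case False
    then have "(x - p) / e \<ge> 1" if "p \<le> c" for p using that assms by (simp add: field_simps)
    then have R2: "bump_int2 ((x - p) / e) = bump_int2 1 + bump_mass * ((x - p) / e - 1)"
      and R1: "bump_int ((x - p) / e) = bump_mass" if "p \<le> c" for p
      using that bump_int2_affine bump_int_eq_mass by blast+
    have "a \<le> c" "b \<le> c" "c \<le> c" using assms by auto
    note R2 = R2[OF this(1)] R2[OF this(2)] R2[OF this(3)] and R1 = R1[OF this(1)] R1[OF this(2)] R1[OF this(3)]
    have "three_point_test a b c e x = e\<^sup>2 * (bump_int2 1 - bump_mass) * ((c-b) - (c-a) + (b-a))
        + e * bump_mass * ((c-b)*(x-a) - (c-a)*(x-b) + (b-a)*(x-c))"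
      unfolding three_point_test_def R2 using assms
      by (simp add: field_simps power2_eq_square)
    also have "\<dots> = 0" by (simp add: algebra_simps)
    finally show ?thesis unfolding three_point_test_d1_def R1 by (simp add: algebra_simps)
  qed
  then show "three_point_test a b c e x = 0" "three_point_test_d1 a b c e x = 0" by auto
qed

lemma bump_rescale_eq_0: "e > 0 \<Longrightarrow> \<bar>x - p\<bar> \<ge> e \<Longrightarrow> bump ((x - p) / e) = 0"
  by (rule bump_eq_0) (simp add: abs_divide field_simps)

lemma three_point_test_d2_eq_0:
  assumes "a < b" "b < c" "e > 0" "x \<notin> {a-e..c+e}"
  shows "three_point_test_d2 a b c e x = 0"
proof -
  have "\<bar>x - p\<bar> \<ge> e" if "a \<le> p" "p \<le> c" for p using assms that by auto
  then show ?thesis unfolding three_point_test_d2_def using assms by (simp add: bump_rescale_eq_0)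
qed

lemma test_fun_three_point_test:
  assumes "a < b" "b < c" "e > 0" "l < a - e" "c + e < r"
  shows "test_fun {l<..<r} (three_point_test a b c e)"
proof -
  have sub: "{x. three_point_test a b c e x \<noteq> 0} \<subseteq> {a-e..c+e}"
  proof
    fix x assume "x \<in> {x. three_point_test a b c e x \<noteq> 0}"
    then show "x \<in> {a-e..c+e}" using three_point_test_eq_0(1)[OF assms(1-3), of x] by fastforce
  qed
  then have "closure {x. three_point_test a b c e x \<noteq> 0} \<subseteq> {a-e..c+e}"
    by (simp add: closure_minimal)
  moreover have "compact (closure {x. three_point_test a b c e x \<noteq> 0})"
    using sub by (meson bounded_closed_interval bounded_subset compact_closure)
  ultimately show ?thesis unfolding test_fun_def using smooth_on_three_point_test assms by auto
qed

lemma integral_bump_rescale: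
  assumes "e > 0" "\<alpha> \<le> p - e" "p + e \<le> \<beta>"
  shows "integral {\<alpha>..\<beta>} (\<lambda>x. bump ((x - p) / e)) = e * bump_mass"
proof -
  have "((\<lambda>x. e * bump_int ((x - p) / e)) has_real_derivative bump ((x - p) / e)) (at x)" for x
    using DERIV_cmult[OF has_real_derivative_rescale[OF has_real_derivative_bump_int], of e e p x] assms
    by simp
  then have "((\<lambda>x. bump ((x - p) / e)) has_integral
      (e * bump_int ((\<beta> - p)/e) - e * bump_int ((\<alpha> - p)/e))) {\<alpha>..\<beta>}"
    using assms
    by (intro fundamental_theorem_of_calculus)
       (auto simp: has_real_derivative_iff_has_vector_derivative[symmetric] intro: DERIV_subset)
  moreover have "bump_int ((\<beta> - p)/e) = bump_mass"
    by (rule bump_int_eq_mass) (use assms in \<open>simp add: field_simps\<close>)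
  moreover have "bump_int ((\<alpha> - p)/e) = 0"
    by (rule bump_int_eq_0) (use assms in \<open>simp add: field_simps\<close>)
  ultimately show ?thesis by (simp add: integral_unique)
qed

lemma integral_bump_rescale_approx:
  assumes e: "e > 0" and p: "\<alpha> \<le> p - e" "p + e \<le> \<beta>" and cw: "continuous_on {\<alpha>..\<beta>} w"
    and near: "\<And>x. x \<in> {\<alpha>..\<beta>} \<Longrightarrow> \<bar>x - p\<bar> < e \<Longrightarrow> \<bar>w x - w p\<bar> \<le> \<eta>"
  shows "\<bar>integral {\<alpha>..\<beta>} (\<lambda>x. w x * bump ((x - p) / e)) - w p * (e * bump_mass)\<bar> \<le> \<eta> * (e * bump_mass)"
proof -
  have cb: "continuous_on {\<alpha>..\<beta>} (\<lambda>x. bump ((x - p) / e))"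
    using continuous_on_bump_rescale continuous_on_subset by blast
  have ib: "(\<lambda>x. bump ((x - p) / e)) integrable_on {\<alpha>..\<beta>}"
    by (rule integrable_continuous_interval[OF cb])
  have iwb: "(\<lambda>x. w x * bump ((x - p) / e)) integrable_on {\<alpha>..\<beta>}"
    by (rule integrable_continuous_interval) (intro continuous_intros cw cb)
  have mass: "integral {\<alpha>..\<beta>} (\<lambda>x. bump ((x - p) / e)) = e * bump_mass"
    by (rule integral_bump_rescale[OF e p])
  have "integral {\<alpha>..\<beta>} (\<lambda>x. w x * bump ((x - p) / e)) - w p * (e * bump_mass)
      = integral {\<alpha>..\<beta>} (\<lambda>x. (w x - w p) * bump ((x - p) / e))"
    unfolding mass[symmetric]
    by (subst integral_mult[OF ib], subst integral_diff[symmetric])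
       (auto intro: iwb integrable_on_mult_right ib simp: algebra_simps)
  also have "\<bar>\<dots>\<bar> \<le> integral {\<alpha>..\<beta>} (\<lambda>x. \<eta> * bump ((x - p) / e))"
  proof -
    have i1: "(\<lambda>x. (w x - w p) * bump ((x - p) / e)) integrable_on {\<alpha>..\<beta>}"
      by (rule integrable_continuous_interval) (intro continuous_intros cw cb)
    have i2: "(\<lambda>x. \<eta> * bump ((x - p) / e)) integrable_on {\<alpha>..\<beta>}"
      by (intro integrable_on_mult_right ib)
    have "norm ((w x - w p) * bump ((x - p) / e)) \<le> \<eta> * bump ((x - p) / e)" if x: "x \<in> {\<alpha>..\<beta>}" for x
    proof (cases "\<bar>x - p\<bar> < e")
      case True
      then show ?thesis using near[OF x] bump_nonneg[of "(x - p) / e"]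
        by (simp add: abs_mult mult_right_mono)
    next
      case False
      then show ?thesis using bump_rescale_eq_0[OF e, of x p] by simp
    qed
    from integral_norm_bound_integral[OF i1 i2 this] show ?thesis by simp
  qed
  also have "\<dots> = \<eta> * (e * bump_mass)" using mass by simp
  finally show ?thesis .
qed

lemma integral_three_point_test_d2_approx:
  fixes w :: "real \<Rightarrow> real"
  assumes abc: "a < b" "b < c" and e: "e > 0" and cw: "continuous_on {a-e..c+e} w"
    and near: "\<And>p x. p \<in> {a, b, c} \<Longrightarrow> x \<in> {a-e..c+e} \<Longrightarrow> \<bar>x - p\<bar> < e \<Longrightarrow> \<bar>w x - w p\<bar> \<le> \<eta>"
  shows "\<bar>integral {a-e..c+e} (\<lambda>x. w x * three_point_test_d2 a b c e x)
           - e * bump_mass * ((c-b) * w a - (c-a) * w b + (b-a) * w c)\<bar>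
         \<le> (\<bar>c-b\<bar> + \<bar>c-a\<bar> + \<bar>b-a\<bar>) * \<eta> * (e * bump_mass)"
proof -
  define m where "m = e * bump_mass"
  define I where "I p = integral {a-e..c+e} (\<lambda>x. w x * bump ((x - p) / e))" for p
  have I: "\<bar>I p - w p * m\<bar> \<le> \<eta> * m" if p: "p \<in> {a, b, c}" for p
  proof -
    have "a - e \<le> p - e" "p + e \<le> c + e" using p abc by auto
    then show ?thesis unfolding I_def m_def
      by (rule integral_bump_rescale_approx[OF e _ _ cw near[OF p]])
  qed
  have iwb: "(\<lambda>x. w x * bump ((x - p) / e)) integrable_on {a-e..c+e}" for p
    by (rule integrable_continuous_interval)
       (intro continuous_intros cw continuous_on_subset[OF continuous_on_bump_rescale] subset_UNIV)
  have "integral {a-e..c+e} (\<lambda>x. w x * three_point_test_d2 a b c e x) =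
      integral {a-e..c+e} (\<lambda>x. (c-b) * (w x * bump ((x - a) / e)) - (c-a) * (w x * bump ((x - b) / e))
          + (b-a) * (w x * bump ((x - c) / e)))"
    by (rule integral_cong) (simp add: three_point_test_d2_def algebra_simps)
  also have "\<dots> = (c-b) * I a - (c-a) * I b + (b-a) * I c"
    unfolding I_def
    by (subst integral_add, (intro integrable_diff integrable_on_mult_right iwb)+,
        subst integral_diff, (intro integrable_on_mult_right iwb)+) simp
  finally have "integral {a-e..c+e} (\<lambda>x. w x * three_point_test_d2 a b c e x)
      - m * ((c-b) * w a - (c-a) * w b + (b-a) * w c)
      = (c-b) * (I a - w a * m) - (c-a) * (I b - w b * m) + (b-a) * (I c - w c * m)"
    by (simp add: algebra_simps)
  also have "\<bar>\<dots>\<bar> \<le> \<bar>c-b\<bar> * (\<eta> * m) + \<bar>c-a\<bar> * (\<eta> * m) + \<bar>b-a\<bar> * (\<eta> * m)"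
  proof -
    have "\<bar>(c-b) * (I a - w a * m)\<bar> \<le> \<bar>c-b\<bar> * (\<eta> * m)"
      "\<bar>(c-a) * (I b - w b * m)\<bar> \<le> \<bar>c-a\<bar> * (\<eta> * m)"
      "\<bar>(b-a) * (I c - w c * m)\<bar> \<le> \<bar>b-a\<bar> * (\<eta> * m)"
      using I[of a] I[of b] I[of c] by (auto simp: abs_mult intro: mult_left_mono)
    then show ?thesis by linarith
  qed
  finally show ?thesis unfolding m_def by (simp add: algebra_simps)
qed

text \<open>Orthogonality to all three-point tests forces \<open>w\<close> to be collinear at \<open>a, b, c\<close>: as \<open>e \<rightarrow> 0\<close>
  the pairing tends to \<open>e \<cdot> bump_mass\<close> times the second difference of \<open>w\<close>.\<close>

lemma collinear_if_orthogonal_three_point_tests: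
  fixes w :: "real \<Rightarrow> real"
  assumes abc: "l < a" "a < b" "b < c" "c < r"
    and cw: "continuous_on {l..r} w"
    and orth: "\<And>e. e > 0 \<Longrightarrow> l < a - e \<Longrightarrow> c + e < r \<Longrightarrow>
               integral {a-e..c+e} (\<lambda>x. w x * three_point_test_d2 a b c e x) = 0"
  shows "(c-b)*w a - (c-a)*w b + (b-a)*w c = 0"
proof -
  define E where "E = (c-b)*w a - (c-a)*w b + (b-a)*w c"
  define S where "S = \<bar>c-b\<bar> + \<bar>c-a\<bar> + \<bar>b-a\<bar>"
  have bound: "\<bar>E\<bar> \<le> S * \<eta>" if \<eta>: "\<eta> > 0" for \<eta>
  proof -
    have cont: "\<exists>d>0. \<forall>x\<in>{l..r}. dist x p < d \<longrightarrow> dist (w x) (w p) < \<eta>" if "p \<in> {l..r}" for p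
      using cw \<eta> that unfolding continuous_on_iff by blast
    obtain da where da: "da > 0" "\<And>x. x\<in>{l..r} \<Longrightarrow> dist x a < da \<Longrightarrow> dist (w x) (w a) < \<eta>"
      using cont[of a] abc by auto
    obtain db where db: "db > 0" "\<And>x. x\<in>{l..r} \<Longrightarrow> dist x b < db \<Longrightarrow> dist (w x) (w b) < \<eta>"
      using cont[of b] abc by auto
    obtain dc where dc: "dc > 0" "\<And>x. x\<in>{l..r} \<Longrightarrow> dist x c < dc \<Longrightarrow> dist (w x) (w c) < \<eta>"
      using cont[of c] abc by auto
    define e where "e = Min {da, db, dc, (a-l)/2, (r-c)/2}"
    have e_le: "e \<le> da" "e \<le> db" "e \<le> dc" "e \<le> (a-l)/2" "e \<le> (r-c)/2"
      unfolding e_def by (rule Min_le; simp)+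
    have e0: "e > 0" unfolding e_def using da(1) db(1) dc(1) abc by simp
    have e: "e > 0" "l < a - e" "c + e < r" using e0 e_le(4,5) abc by auto
    have near: "\<bar>w x - w p\<bar> \<le> \<eta>" if "p \<in> {a, b, c}" "x \<in> {a-e..c+e}" "\<bar>x - p\<bar> < e" for p x
      using that e e_le da(2)[of x] db(2)[of x] dc(2)[of x] by (auto simp: dist_real_def)
    have "continuous_on {a-e..c+e} w" by (rule continuous_on_subset[OF cw]) (use e in auto)
    from integral_three_point_test_d2_approx[of a b c e w \<eta>, OF abc(2,3) e(1) this near] orth[OF e]
    have "\<bar>e * bump_mass * E\<bar> \<le> S * \<eta> * (e * bump_mass)" unfolding E_def S_def by simp
    then show ?thesis using e bump_mass_pos by (simp add: abs_mult)
  qed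
  show ?thesis
  proof (rule ccontr)
    assume "(c-b)*w a - (c-a)*w b + (b-a)*w c \<noteq> 0"
    then have E0: "\<bar>E\<bar> > 0" unfolding E_def by simp
    have S0: "S \<ge> 0" unfolding S_def by simp
    have "\<bar>E\<bar> \<le> S * (\<bar>E\<bar> / (S + 1))" using bound[of "\<bar>E\<bar> / (S + 1)"] E0 S0 by simp
    also have "\<dots> < \<bar>E\<bar>" using E0 S0 by (simp add: field_simps)
    finally show False by simp
  qed
qed

lemma affine_on_interval_if_collinear:
  fixes w :: "real \<Rightarrow> real"
  assumes "l < r"
    and collinear: "\<And>a b c. l < a \<Longrightarrow> a < b \<Longrightarrow> b < c \<Longrightarrow> c < r \<Longrightarrow>
                      (c-b)*w a - (c-a)*w b + (b-a)*w c = 0"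
  shows "\<exists>\<alpha> \<beta>. \<forall>x\<in>{l<..<r}. w x = \<alpha> + \<beta> * x"
proof -
  define m1 where "m1 = l + (r-l)/3"
  define m2 where "m2 = l + 2*(r-l)/3"
  have m: "l < m1" "m1 < m2" "m2 < r" using assms(1) by (auto simp: m1_def m2_def field_simps)
  define s where "s = (w m2 - w m1) / (m2 - m1)"
  have aff0: "w x * (m2 - m1) = w m1 * (m2 - x) + w m2 * (x - m1)" if x: "x \<in> {l<..<r}" for x
  proof -
    consider "x < m1" | "x = m1" | "m1 < x \<and> x < m2" | "x = m2" | "x > m2" by linarith
    then show ?thesis
      by cases (use collinear[of x m1 m2] collinear[of m1 x m2] collinear[of m1 m2 x] x m in
                \<open>auto simp: algebra_simps\<close>)
  qed
  have "w x = w m1 + s * (x - m1)" if "x \<in> {l<..<r}" for x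
    using aff0[OF that] m unfolding s_def by (simp add: field_simps)
  then have "w x = (w m1 - s * m1) + s * x" if "x \<in> {l<..<r}" for x
    using that by (simp add: algebra_simps)
  then show ?thesis by blast
qed

lemma lebesgue_integral_eq_integral_if_vanishing_outside:
  fixes g :: "real \<Rightarrow> real"
  assumes "continuous_on UNIV g" "\<And>x. x \<notin> {a..b} \<Longrightarrow> g x = 0"
  shows "(LINT x|lborel. g x) = integral {a..b} g"
proof -
  have e: "(\<lambda>x. indicator {a..b} x *\<^sub>R g x) = g"
    by (rule ext) (use assms(2) in \<open>auto simp: indicator_def\<close>)
  have "integrable lborel (\<lambda>x. indicator {a..b} x *\<^sub>R g x)"
    by (rule borel_integrable_compact) (use assms(1) continuous_on_subset in auto)
  then have si: "set_integrable lborel {a..b} g" by (simp add: set_integrable_def)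
  have "(LINT x|lborel. g x) = (LINT x:{a..b}|lborel. g x)"
    unfolding set_lebesgue_integral_def e ..
  also have "\<dots> = integral {a..b} g" by (rule set_borel_integral_eq_integral(2)[OF si])
  finally show ?thesis .
qed

lemma has_integral_by_parts_twice:
  fixes P K k \<phi> \<phi>' \<phi>'' :: "real \<Rightarrow> real"
  assumes "\<alpha> \<le> \<beta>"
    and dP: "\<And>x. x \<in> {\<alpha>..\<beta>} \<Longrightarrow> (P has_real_derivative K x) (at x within {\<alpha>..\<beta>})"
    and dK: "\<And>x. x \<in> {\<alpha>..\<beta>} \<Longrightarrow> (K has_real_derivative k x) (at x within {\<alpha>..\<beta>})"
    and d\<phi>: "\<And>x. x \<in> {\<alpha>..\<beta>} \<Longrightarrow> (\<phi> has_real_derivative \<phi>' x) (at x within {\<alpha>..\<beta>})"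
    and d\<phi>': "\<And>x. x \<in> {\<alpha>..\<beta>} \<Longrightarrow> (\<phi>' has_real_derivative \<phi>'' x) (at x within {\<alpha>..\<beta>})"
    and ends: "\<phi> \<alpha> = 0" "\<phi> \<beta> = 0" "\<phi>' \<alpha> = 0" "\<phi>' \<beta> = 0"
  shows "((\<lambda>x. P x * \<phi>'' x - k x * \<phi> x) has_integral 0) {\<alpha>..\<beta>}"
proof -
  define G where "G x = P x * \<phi>' x - K x * \<phi> x" for x
  have "((\<lambda>x. P x * \<phi>'' x - k x * \<phi> x) has_integral (G \<beta> - G \<alpha>)) {\<alpha>..\<beta>}"
  proof (rule fundamental_theorem_of_calculus[OF assms(1)])
    fix x assume x: "x \<in> {\<alpha>..\<beta>}"
    have "(G has_real_derivative (K x * \<phi>' x + \<phi>'' x * P x) - (k x * \<phi> x + \<phi>' x * K x))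
        (at x within {\<alpha>..\<beta>})"
      unfolding G_def[abs_def] by (rule DERIV_diff[OF DERIV_mult[OF dP d\<phi>'] DERIV_mult[OF dK d\<phi>]]) (use x in auto)
    then show "(G has_vector_derivative (P x * \<phi>'' x - k x * \<phi> x)) (at x within {\<alpha>..\<beta>})"
      by (simp add: has_real_derivative_iff_has_vector_derivative[symmetric] algebra_simps)
  qed
  moreover have "G \<beta> - G \<alpha> = 0" unfolding G_def using ends by simp
  ultimately show ?thesis by simp
qed

lemma orthogonal_three_point_tests_if_weak_second_deriv:
  fixes f k P K :: "real \<Rightarrow> real"
  assumes abc: "a < b" "b < c" and e: "e > 0" "l < a - e" "c + e < r"
    and cf: "continuous_on UNIV f" and ck: "continuous_on UNIV k"
    and weak: "\<And>\<phi>. test_fun {l<..<r} \<phi> \<Longrightarrow>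
       (LINT x|lborel. f x * deriv (deriv \<phi>) x) = (LINT x|lborel. k x * \<phi> x)"
    and dK: "\<And>x. x \<in> {l..r} \<Longrightarrow> (K has_real_derivative k x) (at x within {l..r})"
    and dP: "\<And>x. x \<in> {l..r} \<Longrightarrow> (P has_real_derivative K x) (at x within {l..r})"
  shows "integral {a-e..c+e} (\<lambda>x. (f x - P x) * three_point_test_d2 a b c e x) = 0"
proof -
  define \<alpha> where "\<alpha> = a - e"
  define \<beta> where "\<beta> = c + e"
  let ?\<phi> = "three_point_test a b c e" and ?\<phi>1 = "three_point_test_d1 a b c e"
    and ?\<phi>2 = "three_point_test_d2 a b c e"
  have e0: "e \<noteq> 0" using e by simp
  have sub: "{\<alpha>..\<beta>} \<subseteq> {l..r}" using e abc by (auto simp: \<alpha>_def \<beta>_def)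
  have vanish: "x \<le> \<alpha> \<or> x \<ge> \<beta> \<Longrightarrow> ?\<phi> x = 0 \<and> ?\<phi>1 x = 0" for x
    using three_point_test_eq_0[OF abc e(1)] unfolding \<alpha>_def \<beta>_def by blast
  have 1: "(LINT x|lborel. f x * deriv (deriv ?\<phi>) x) = integral {\<alpha>..\<beta>} (\<lambda>x. f x * ?\<phi>2 x)"
    unfolding deriv_deriv_three_point_test[OF e0]
    by (rule lebesgue_integral_eq_integral_if_vanishing_outside)
       (auto intro!: continuous_intros cf continuous_on_three_point_test_d2
             simp: \<alpha>_def \<beta>_def three_point_test_d2_eq_0[OF abc e(1)])
  have 2: "(LINT x|lborel. k x * ?\<phi> x) = integral {\<alpha>..\<beta>} (\<lambda>x. k x * ?\<phi> x)"
    by (rule lebesgue_integral_eq_integral_if_vanishing_outside)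
       (use vanish in \<open>auto intro!: continuous_intros ck continuous_on_three_point_test e0\<close>)
  have "((\<lambda>x. P x * ?\<phi>2 x - k x * ?\<phi> x) has_integral 0) {\<alpha>..\<beta>}"
  proof (rule has_integral_by_parts_twice)
    show "\<alpha> \<le> \<beta>" using abc e by (simp add: \<alpha>_def \<beta>_def)
    show "(P has_real_derivative K x) (at x within {\<alpha>..\<beta>})"
      "(K has_real_derivative k x) (at x within {\<alpha>..\<beta>})" if "x \<in> {\<alpha>..\<beta>}" for x
      using DERIV_subset[OF dP sub] DERIV_subset[OF dK sub] that sub by auto
    show "(?\<phi> has_real_derivative ?\<phi>1 x) (at x within {\<alpha>..\<beta>})"
      "(?\<phi>1 has_real_derivative ?\<phi>2 x) (at x within {\<alpha>..\<beta>})" for x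
      by (rule has_field_derivative_at_within[OF has_real_derivative_three_point_test[OF e0]],
          rule has_field_derivative_at_within[OF has_real_derivative_three_point_test_d1[OF e0]])
  qed (use vanish in auto)
  then have 3: "integral {\<alpha>..\<beta>} (\<lambda>x. P x * ?\<phi>2 x - k x * ?\<phi> x) = 0"
    by (simp add: integral_unique)
  have "continuous_on {l..r} P"
    using dP by (meson DERIV_continuous continuous_on_eq_continuous_within)
  then have cP: "continuous_on {\<alpha>..\<beta>} P" using sub continuous_on_subset by blast
  have c: "continuous_on {\<alpha>..\<beta>} g" if "continuous_on UNIV g" for g
    using that continuous_on_subset by blast
  have i1: "(\<lambda>x. f x * ?\<phi>2 x) integrable_on {\<alpha>..\<beta>}"
    by (intro integrable_continuous_interval continuous_intros c cf continuous_on_three_point_test_d2)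
  have i2: "(\<lambda>x. P x * ?\<phi>2 x) integrable_on {\<alpha>..\<beta>}"
    by (intro integrable_continuous_interval continuous_intros c cP continuous_on_three_point_test_d2)
  have i3: "(\<lambda>x. k x * ?\<phi> x) integrable_on {\<alpha>..\<beta>}"
    by (intro integrable_continuous_interval continuous_intros c ck continuous_on_three_point_test e0)
  have "integral {\<alpha>..\<beta>} (\<lambda>x. f x * ?\<phi>2 x) = integral {\<alpha>..\<beta>} (\<lambda>x. P x * ?\<phi>2 x)"
    using weak[OF test_fun_three_point_test[OF abc e]] 1 2 3 integral_diff[OF i2 i3] by simp
  then show ?thesis
    using integral_diff[OF i1 i2] unfolding \<alpha>_def \<beta>_def by (simp add: algebra_simps)
qed

lemma C2_if_weak_second_deriv:
  fixes f k :: "real \<Rightarrow> real"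
  assumes lr: "l < r" and cf: "continuous_on UNIV f" and ck: "continuous_on UNIV k"
    and weak: "\<And>\<phi>. test_fun {l<..<r} \<phi> \<Longrightarrow>
       (LINT x|lborel. f x * deriv (deriv \<phi>) x) = (LINT x|lborel. k x * \<phi> x)"
    and x: "x \<in> {l<..<r}"
  shows "(f has_real_derivative deriv f x) (at x) \<and> (deriv f has_real_derivative k x) (at x)"
proof -
  define K where "K x = integral {l..x} k" for x
  define P where "P x = integral {l..x} K" for x
  have dK: "(K has_real_derivative k x) (at x within {l..r})" if "x \<in> {l..r}" for x
    unfolding K_def[abs_def] by (rule integral_has_real_derivative) (use ck that continuous_on_subset in auto)
  have "continuous_on {l..r} K"
    using dK by (meson DERIV_continuous continuous_on_eq_continuous_within)
  then have dP: "(P has_real_derivative K x) (at x within {l..r})" if "x \<in> {l..r}" for x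
    unfolding P_def[abs_def] by (rule integral_has_real_derivative) (use that in auto)
  have "continuous_on {l..r} P"
    using dP by (meson DERIV_continuous continuous_on_eq_continuous_within)
  then have cw: "continuous_on {l..r} (\<lambda>x. f x - P x)"
    by (intro continuous_intros) (use cf continuous_on_subset in blast)
  have coll: "(c-b) * (f a - P a) - (c-a) * (f b - P b) + (b-a) * (f c - P c) = 0"
    if abc: "l < a" "a < b" "b < c" "c < r" for a b c
  proof (rule collinear_if_orthogonal_three_point_tests[OF abc cw])
    fix e :: real assume e: "e > 0" "l < a - e" "c + e < r"
    show "integral {a-e..c+e} (\<lambda>x. (f x - P x) * three_point_test_d2 a b c e x) = 0"
      by (rule orthogonal_three_point_tests_if_weak_second_deriv[OF abc(2,3) e cf ck weak dK dP])
  qed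
  obtain \<alpha> \<beta> where aff: "\<And>x. x \<in> {l<..<r} \<Longrightarrow> f x - P x = \<alpha> + \<beta> * x"
    using affine_on_interval_if_collinear[of l r "\<lambda>x. f x - P x", OF lr coll] by blast
  have at_eq: "at y within {l..r} = at y" if "y \<in> {l<..<r}" for y
    by (rule at_within_interior) (use that in auto)
  have df: "(f has_real_derivative K y + \<beta>) (at y)" if y: "y \<in> {l<..<r}" for y
  proof -
    have "(P has_real_derivative K y) (at y)" using dP[of y] y at_eq[OF y] by auto
    then have "((\<lambda>x. P x + (\<alpha> + \<beta> * x)) has_real_derivative K y + \<beta>) (at y)"
      by (auto intro!: derivative_eq_intros)
    then show ?thesis
      by (rule has_field_derivative_transform_within_open[of _ _ _ "{l<..<r}"])
         (use y aff in \<open>auto simp: algebra_simps\<close>)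
  qed
  have deq: "deriv f y = K y + \<beta>" if "y \<in> {l<..<r}" for y using df[OF that] by (rule DERIV_imp_deriv)
  have "(K has_real_derivative k x) (at x)" using dK[of x] x at_eq[OF x] by auto
  then have "((\<lambda>y. K y + \<beta>) has_real_derivative k x) (at x)"
    by (auto intro!: derivative_eq_intros)
  then have "(deriv f has_real_derivative k x) (at x)"
    by (rule has_field_derivative_transform_within_open[of _ _ _ "{l<..<r}"]) (use x deq in auto)
  then show ?thesis using df[OF x] deq[OF x] by simp
qed

lemma test_fun_deriv:
  assumes "test_fun U \<phi>"
  shows "test_fun U (deriv \<phi>)"
proof -
  let ?S = "{x. \<phi> x \<noteq> 0}"
  have sm: "smooth_on UNIV \<phi>" and cp: "compact (closure ?S)" and su: "closure ?S \<subseteq> U"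
    using assms unfolding test_fun_def by auto
  have "{x. deriv \<phi> x \<noteq> 0} \<subseteq> closure ?S"
  proof
    fix x assume x: "x \<in> {x. deriv \<phi> x \<noteq> 0}"
    show "x \<in> closure ?S"
    proof (rule ccontr)
      assume "x \<notin> closure ?S"
      then have "(\<phi> has_real_derivative 0) (at x)"
        by (intro has_real_derivative_0_if_locally_0[of "- closure ?S"]) (use closure_subset[of ?S] in auto)
      then show False using x DERIV_imp_deriv by force
    qed
  qed
  then have cs: "closure {x. deriv \<phi> x \<noteq> 0} \<subseteq> closure ?S"
    by (rule closure_minimal) (rule closed_closure)
  moreover have "compact (closure {x. deriv \<phi> x \<noteq> 0})"
    using cs cp by (meson bounded_subset closure_subset compact_closure compact_imp_bounded order_trans)
  ultimately show ?thesis unfolding test_fun_def using smooth_on_deriv[OF sm] su by auto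
qed

lemma continuous_on_test_fun: "test_fun U \<phi> \<Longrightarrow> continuous_on UNIV \<phi>"
proof -
  assume "test_fun U \<phi>"
  then have "smooth_on UNIV \<phi>" unfolding test_fun_def by simp
  then have "isCont \<phi> x" for x using smooth_on_has_higher_deriv[of UNIV \<phi> x 0] DERIV_continuous by simp
  then show ?thesis by (simp add: continuous_at_imp_continuous_on)
qed

lemma test_fun_eq_0_outside: "test_fun U \<phi> \<Longrightarrow> x \<notin> U \<Longrightarrow> \<phi> x = 0"
  unfolding test_fun_def using closure_subset[of "{x. \<phi> x \<noteq> 0}"] by blast

lemma weak_second_deriv_test_identity:
  fixes f h k :: "real \<Rightarrow> real"
  assumes H2: "H2_punct_with f h" and AE: "AE x in lborel. x \<noteq> 0 \<longrightarrow> h x = k x"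
    and ck: "continuous_on UNIV k" and t: "test_fun (- {0}) \<phi>"
  shows "(LINT x|lborel. f x * deriv (deriv \<phi>) x) = (LINT x|lborel. k x * \<phi> x)"
proof -
  obtain g where wf: "weak_deriv (- {0}) f g" and wg: "weak_deriv (- {0}) g h"
    using H2 unfolding H2_punct_with_def by blast
  have hm: "h \<in> borel_measurable lborel" using H2 unfolding H2_punct_with_def L2_on_def by (elim conjE)
  have W1: "\<forall>\<psi>. test_fun (- {0}) \<psi> \<longrightarrow> (LINT x|lborel. f x * deriv \<psi> x) = - (LINT x|lborel. g x * \<psi> x)"
    using wf unfolding weak_deriv_def by (elim conjE)
  have W2: "\<forall>\<psi>. test_fun (- {0}) \<psi> \<longrightarrow> (LINT x|lborel. g x * deriv \<psi> x) = - (LINT x|lborel. h x * \<psi> x)"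
    using wg unfolding weak_deriv_def by (elim conjE)
  have "(LINT x|lborel. f x * deriv (deriv \<phi>) x) = - (LINT x|lborel. g x * deriv \<phi> x)"
    using W1[rule_format, OF test_fun_deriv[OF t]] .
  also have "(LINT x|lborel. g x * deriv \<phi> x) = - (LINT x|lborel. h x * \<phi> x)"
    using W2[rule_format, OF t] .
  also have "(LINT x|lborel. h x * \<phi> x) = (LINT x|lborel. k x * \<phi> x)"
  proof (rule integral_cong_AE)
    have pm: "\<phi> \<in> borel_measurable lborel"
      using borel_measurable_continuous_onI[OF continuous_on_test_fun[OF t]] by simp
    have km: "k \<in> borel_measurable lborel" using borel_measurable_continuous_onI[OF ck] by simp
    show "(\<lambda>x. h x * \<phi> x) \<in> borel_measurable lborel" using hm pm by (rule borel_measurable_times)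
    show "(\<lambda>x. k x * \<phi> x) \<in> borel_measurable lborel" using km pm by (rule borel_measurable_times)
    have "\<phi> 0 = 0" by (rule test_fun_eq_0_outside[OF t]) simp
    then show "AE x in lborel. h x * \<phi> x = k x * \<phi> x"
      by (intro eventually_mono[OF AE]) (metis mult_zero_right)
  qed
  finally show ?thesis by (simp only: minus_minus)
qed

section \<open>Decay of subsolutions on a half-line\<close>

lemma integrable_nonneg_not_eventually_ge:
  fixes g :: "real \<Rightarrow> real"
  assumes ig: "integrable lborel g" and g0: "\<And>x. g x \<ge> 0" and \<delta>: "\<delta> > 0"
  shows "\<exists>x\<ge>T. g x < \<delta>"
proof (rule ccontr)
  assume "\<not> (\<exists>x\<ge>T. g x < \<delta>)"
  then have ge: "x \<ge> T \<Longrightarrow> g x \<ge> \<delta>" for x by (simp add: not_less)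
  have bnd: "\<delta> * real n \<le> (LINT x|lborel. g x)" for n :: nat
  proof -
    let ?f = "\<lambda>x. indicator {T..T + real n} x *\<^sub>R (\<lambda>_. \<delta>) x"
    have int: "integrable lborel ?f"
      by (rule borel_integrable_compact) (auto intro: continuous_intros)
    then have "set_integrable lborel {T..T + real n} (\<lambda>_. \<delta>)" by (simp add: set_integrable_def)
    then have "(LINT x|lborel. ?f x) = integral {T..T + real n} (\<lambda>_. \<delta>)"
      unfolding set_lebesgue_integral_def[symmetric] by (rule set_borel_integral_eq_integral(2))
    also have "\<dots> = \<delta> * real n" by simp
    finally have "(LINT x|lborel. ?f x) = \<delta> * real n" .
    moreover have "(LINT x|lborel. ?f x) \<le> (LINT x|lborel. g x)"
      by (rule integral_mono[OF int ig]) (use ge g0 in \<open>auto simp: indicator_def\<close>)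
    ultimately show ?thesis by (simp add: mult.commute)
  qed
  obtain n :: nat where "(LINT x|lborel. g x) / \<delta> < real n" using reals_Archimedean2 by blast
  then show False using bnd[of n] \<delta> by (simp add: field_simps)
qed

lemma ge_linear_if_deriv_ge:
  fixes f f' :: "real \<Rightarrow> real"
  assumes xy: "x \<le> y" and df: "\<And>z. x \<le> z \<Longrightarrow> z \<le> y \<Longrightarrow> (f has_real_derivative f' z) (at z)"
    and ge: "\<And>z. x \<le> z \<Longrightarrow> z \<le> y \<Longrightarrow> f' z \<ge> \<delta>"
  shows "f y \<ge> f x + \<delta> * (y - x)"
proof -
  have "(\<lambda>y. f y - \<delta> * y) x \<le> (\<lambda>y. f y - \<delta> * y) y"
  proof (rule DERIV_nonneg_imp_nondecreasing[OF xy])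
    fix z assume z: "x \<le> z" "z \<le> y"
    have "((\<lambda>y. f y - \<delta> * y) has_real_derivative f' z - \<delta>) (at z)"
      using df[OF z] by (auto intro!: derivative_eq_intros)
    then show "\<exists>d. ((\<lambda>y. f y - \<delta> * y) has_real_derivative d) (at z) \<and> d \<ge> 0" using ge[OF z] by auto
  qed
  then show ?thesis by (simp add: algebra_simps)
qed

text \<open>A convex function with a positive slope somewhere grows linearly, which integrability forbids.\<close>

lemma integrable_convex_nonincreasing:
  fixes u u' u'' :: "real \<Rightarrow> real"
  assumes int: "integrable lborel u" and nonneg: "\<And>x. u x \<ge> 0"
    and du: "\<And>x. x \<ge> R \<Longrightarrow> (u has_real_derivative u' x) (at x)"
    and du': "\<And>x. x \<ge> R \<Longrightarrow> (u' has_real_derivative u'' x) (at x)"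
    and convex: "\<And>x. x \<ge> R \<Longrightarrow> u'' x \<ge> 0"
    and xy: "R \<le> x" "x \<le> y"
  shows "u y \<le> u x"
proof -
  have slope: "u' x \<le> 0" if x: "x \<ge> R" for x
  proof (rule ccontr)
    assume "\<not> u' x \<le> 0"
    then have pos: "u' x > 0" by simp
    have "u' z \<ge> u' x" if "x \<le> z" for z
      using ge_linear_if_deriv_ge[OF that, of u' u'' 0] du' convex x by fastforce
    then have lin: "u y \<ge> u x + u' x * (y - x)" if "x \<le> y" for y
      using ge_linear_if_deriv_ge[OF that, of u u'] du x by fastforce
    have "u y \<ge> 1" if "y \<ge> x + 1 / u' x" for y
    proof -
      have "y \<ge> x" using that pos by (smt (verit) divide_pos_pos)
      moreover have "u' x * (y - x) \<ge> u' x * (1 / u' x)" using that pos by (intro mult_left_mono) auto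
      ultimately show ?thesis using lin[of y] pos nonneg[of x] by simp
    qed
    then show False using integrable_nonneg_not_eventually_ge[OF int nonneg, of 1 "x + 1 / u' x"] by force
  qed
  show ?thesis
  proof (rule DERIV_nonpos_imp_nonincreasing[OF xy(2)])
    fix z assume z: "x \<le> z" "z \<le> y"
    show "\<exists>d. (u has_real_derivative d) (at z) \<and> d \<le> 0"
      by (intro exI[of _ "u' z"] conjI du slope) (use xy z in auto)
  qed
qed

lemma deriv2_nonpos_at_interior_max:
  fixes w w' w'' :: "real \<Rightarrow> real"
  assumes dw: "\<And>x. x \<in> {a..b} \<Longrightarrow> (w has_real_derivative w' x) (at x)"
    and dw': "(w' has_real_derivative w'' c) (at c)"
    and c: "a < c" "c < b" and max: "\<And>y. y \<in> {a..b} \<Longrightarrow> w y \<le> w c"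
  shows "w'' c \<le> 0"
proof (rule ccontr)
  assume "\<not> w'' c \<le> 0"
  then obtain d where d: "d > 0" "\<And>h. h > 0 \<Longrightarrow> h < d \<Longrightarrow> w' c < w' (c + h)"
    using DERIV_pos_inc_right[OF dw'] by auto
  have w'0: "w' c = 0"
  proof (rule DERIV_local_max[OF dw[of c]])
    show "0 < min (c - a) (b - c)" using c by simp
    show "\<forall>y. \<bar>c - y\<bar> < min (c - a) (b - c) \<longrightarrow> w y \<le> w c"
      using max by (auto simp: abs_if)
  qed (use c in simp)
  define m where "m = min d (b - c)"
  define h where "h = m / 2"
  have "m > 0" "m \<le> d" "m \<le> b - c" unfolding m_def using d c by auto
  then have h: "h > 0" "h < d" "c + h \<le> b" unfolding h_def by auto
  obtain z where z: "c < z" "z < c + h" "w (c + h) - w c = (c + h - c) * w' z"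
    using MVT2[of c "c + h" w w'] h dw c by force
  have "w' z > 0" using d(2)[of "z - c"] z h w'0 by simp
  then have "h * w' z > 0" using h by simp
  then have "w (c + h) > w c" using z(3) by simp
  moreover have "c + h \<in> {a..b}" using h c by auto
  ultimately show False using max by fastforce
qed

lemma maximum_principle_half_line:
  fixes w w' w'' :: "real \<Rightarrow> real"
  assumes \<omega>: "\<omega> > 0"
    and dw: "\<And>x. x \<ge> R \<Longrightarrow> (w has_real_derivative w' x) (at x)"
    and dw': "\<And>x. x \<ge> R \<Longrightarrow> (w' has_real_derivative w'' x) (at x)"
    and sub: "\<And>x. x \<ge> R \<Longrightarrow> w'' x \<ge> \<omega> * w x"
    and wR: "w R \<le> 0"
    and small: "\<And>\<eta>. \<eta> > 0 \<Longrightarrow> \<exists>T. \<forall>y\<ge>T. w y < \<eta>"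
    and x: "x \<ge> R"
  shows "w x \<le> 0"
proof (rule ccontr)
  assume "\<not> w x \<le> 0"
  then have wx: "w x > 0" by simp
  then have xR: "x > R" using x wR by (cases "x = R") auto
  obtain T where T: "\<And>y. y \<ge> T \<Longrightarrow> w y < w x" using small[OF wx] by blast
  define T' where "T' = max T (x + 1)"
  have cw: "continuous_on {R..T'} w"
    using dw by (meson DERIV_continuous atLeastAtMost_iff continuous_at_imp_continuous_on)
  obtain x0 where x0: "x0 \<in> {R..T'}" "\<And>y. y \<in> {R..T'} \<Longrightarrow> w y \<le> w x0"
    using continuous_attains_sup[OF compact_Icc _ cw] xR unfolding T'_def by fastforce
  have "x \<in> {R..T'}" using xR unfolding T'_def by auto
  then have wx0: "w x0 \<ge> w x" using x0 by blast
  have "x0 \<noteq> R" using wx0 wx wR by auto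
  moreover have "x0 \<noteq> T'" using T[of T'] wx0 unfolding T'_def by fastforce
  ultimately have x0i: "R < x0" "x0 < T'" using x0(1) by auto
  have "w'' x0 \<le> 0"
    by (rule deriv2_nonpos_at_interior_max[where a = R and b = T' and w = w and w' = w' and w'' = w''
          and c = x0, OF _ dw'[OF less_imp_le[OF x0i(1)]] x0i x0(2)])
       (use dw in auto)
  moreover have "w'' x0 > 0" using sub[of x0] x0i wx0 wx \<omega> by (smt (verit) mult_pos_pos)
  ultimately show False by simp
qed

text \<open>Comparison with \<open>u R e\<^sup>-\<^sup>\<surd>\<^sup>\<omega>\<^sup>(\<^sup>x\<^sup>-\<^sup>R\<^sup>)\<close>, a solution of \<open>v'' = \<omega> v\<close>, by the maximum principle.\<close>

lemma integrable_subsolution_exp_decay: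
  fixes u u' u'' :: "real \<Rightarrow> real"
  assumes int: "integrable lborel u" and nonneg: "\<And>x. u x \<ge> 0" and \<omega>: "\<omega> > 0"
    and du: "\<And>x. x \<ge> R \<Longrightarrow> (u has_real_derivative u' x) (at x)"
    and du': "\<And>x. x \<ge> R \<Longrightarrow> (u' has_real_derivative u'' x) (at x)"
    and sub: "\<And>x. x \<ge> R \<Longrightarrow> u'' x \<ge> \<omega> * u x"
    and x: "x \<ge> R"
  shows "u x \<le> u R * exp (- sqrt \<omega> * (x - R))"
proof -
  have convex: "u'' x \<ge> 0" if "x \<ge> R" for x
    using order_trans[OF mult_nonneg_nonneg[OF less_imp_le[OF \<omega>] nonneg] sub[OF that]] .
  have nonincr: "u y \<le> u x" if "R \<le> x" "x \<le> y" for x y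
    by (rule integrable_convex_nonincreasing[OF int nonneg du du' convex that])
  define k where "k = sqrt \<omega>"
  have k: "k * k = \<omega>" unfolding k_def using \<omega> by simp
  define w where "w x = u x - u R * exp (- k * (x - R))" for x
  have dw: "(w has_real_derivative u' x + u R * k * exp (- k * (x - R))) (at x)" if "x \<ge> R" for x
    unfolding w_def[abs_def] using du[OF that] by (auto intro!: derivative_eq_intros simp: algebra_simps)
  have dw': "((\<lambda>x. u' x + u R * k * exp (- k * (x - R))) has_real_derivative
      u'' x - u R * (k * k) * exp (- k * (x - R))) (at x)" if "x \<ge> R" for x
    using du'[OF that] by (auto intro!: derivative_eq_intros simp: algebra_simps)
  have sub': "u'' x - u R * (k * k) * exp (- k * (x - R)) \<ge> \<omega> * w x" if "x \<ge> R" for x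
    using sub[OF that] unfolding w_def k by (simp add: algebra_simps)
  have wR: "w R \<le> 0" unfolding w_def by simp
  have small: "\<exists>T. \<forall>y\<ge>T. w y < \<eta>" if \<eta>: "\<eta> > 0" for \<eta>
  proof -
    obtain y0 where "y0 \<ge> R" "u y0 < \<eta>"
      using integrable_nonneg_not_eventually_ge[OF int nonneg \<eta>] by blast
    moreover have "w y \<le> u y" for y unfolding w_def using nonneg[of R] by simp
    ultimately show ?thesis using nonincr by (meson order.trans order_le_less_trans)
  qed
  have "w x \<le> 0" by (rule maximum_principle_half_line[OF \<omega> dw dw' sub' wR small x])
  then show ?thesis unfolding w_def k_def by simp
qed

lemma deriv_le_exp_if_bounded:
  fixes f f' f'' :: "real \<Rightarrow> real"
  assumes \<beta>: "\<beta> > 0"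
    and df: "\<And>x. x \<ge> R \<Longrightarrow> (f has_real_derivative f' x) (at x)"
    and df': "\<And>x. x \<ge> R \<Longrightarrow> (f' has_real_derivative f'' x) (at x)"
    and f'': "\<And>x. x \<ge> R \<Longrightarrow> \<bar>f'' x\<bar> \<le> C * exp (- \<beta> * x)"
    and bounded: "\<And>x. x \<ge> R \<Longrightarrow> \<bar>f x\<bar> \<le> B"
    and x0: "x0 \<ge> R"
  shows "f' x0 \<le> C / \<beta> * exp (- \<beta> * x0)"
proof (rule ccontr)
  assume "\<not> f' x0 \<le> C / \<beta> * exp (- \<beta> * x0)"
  then have gt: "f' x0 > C / \<beta> * exp (- \<beta> * x0)" by simp
  have C0: "C \<ge> 0" using f''[OF x0] by (smt (verit) exp_gt_zero zero_le_mult_iff)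
  have B0: "B \<ge> 0" using bounded[OF x0] by simp
  define E where "E y = C / \<beta> * exp (- \<beta> * y)" for y
  have E0: "E y \<ge> 0" for y unfolding E_def using C0 \<beta> by simp
  define \<delta> where "\<delta> = f' x0 - E x0"
  have \<delta>0: "\<delta> > 0" unfolding \<delta>_def E_def using gt by simp
  have "((\<lambda>y. f' y - E y) has_real_derivative f'' z + C * exp (- \<beta> * z)) (at z)" if "x0 \<le> z" for z
    unfolding E_def using df'[of z] that x0 \<beta> by (auto intro!: derivative_eq_intros simp: field_simps)
  moreover have "f'' z + C * exp (- \<beta> * z) \<ge> 0" if "x0 \<le> z" for z using f''[of z] that x0 by (smt (verit))
  ultimately have "f' y - E y \<ge> \<delta>" if "x0 \<le> y" for y
    using ge_linear_if_deriv_ge[OF that, of "\<lambda>y. f' y - E y" _ 0] unfolding \<delta>_def by fastforce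
  then have F: "f y \<ge> f x0 + \<delta> * (y - x0)" if "x0 \<le> y" for y
    using ge_linear_if_deriv_ge[OF that, of f f' \<delta>] df x0 E0 by (smt (verit) order_trans)
  define y where "y = x0 + (2 * B + 1) / \<delta>"
  have y: "y \<ge> x0" unfolding y_def using B0 \<delta>0 by simp
  have "f y \<ge> f x0 + 2 * B + 1" using F[OF y] \<delta>0 unfolding y_def by simp
  moreover have "\<bar>f x0\<bar> \<le> B" "\<bar>f y\<bar> \<le> B" using bounded x0 y by auto
  ultimately show False by linarith
qed

lemma abs_deriv_le_exp_if_bounded:
  fixes f f' f'' :: "real \<Rightarrow> real"
  assumes \<beta>: "\<beta> > 0"
    and df: "\<And>x. x \<ge> R \<Longrightarrow> (f has_real_derivative f' x) (at x)"
    and df': "\<And>x. x \<ge> R \<Longrightarrow> (f' has_real_derivative f'' x) (at x)"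
    and f'': "\<And>x. x \<ge> R \<Longrightarrow> \<bar>f'' x\<bar> \<le> C * exp (- \<beta> * x)"
    and bounded: "\<And>x. x \<ge> R \<Longrightarrow> \<bar>f x\<bar> \<le> B"
    and x0: "x0 \<ge> R"
  shows "\<bar>f' x0\<bar> \<le> C / \<beta> * exp (- \<beta> * x0)"
proof -
  have "f' x0 \<le> C / \<beta> * exp (- \<beta> * x0)" by (rule deriv_le_exp_if_bounded[OF assms])
  moreover have "(\<lambda>x. - f' x) x0 \<le> C / \<beta> * exp (- \<beta> * x0)"
  proof (rule deriv_le_exp_if_bounded[of \<beta> R "\<lambda>x. - f x" "\<lambda>x. - f' x" "\<lambda>x. - f'' x" C B x0])
    show "((\<lambda>x. - f x) has_real_derivative - f' x) (at x)" if "x \<ge> R" for x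
      using DERIV_minus[OF df[OF that]] .
    show "((\<lambda>x. - f' x) has_real_derivative - f'' x) (at x)" if "x \<ge> R" for x
      using DERIV_minus[OF df'[OF that]] .
  qed (use assms in auto)
  ultimately show ?thesis by simp
qed

lemma power_times_bounded_if_exp_decay:
  fixes g :: "real \<Rightarrow> real"
  assumes \<beta>: "\<beta> > 0" and \<delta>: "\<delta> > 0" and decay: "\<And>x. x \<ge> R \<Longrightarrow> \<bar>g x\<bar> \<le> K * exp (- \<beta> * x)"
    and cg: "continuous_on {\<delta>..} g"
  shows "\<exists>C. \<forall>x\<ge>\<delta>. \<bar>x ^ j * g x\<bar> \<le> C"
proof -
  have "((\<lambda>x::real. x ^ j * exp (- \<beta> * x)) \<longlongrightarrow> 0) at_top" using \<beta> by real_asymp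
  then have "eventually (\<lambda>x. \<bar>x ^ j * exp (- \<beta> * x)\<bar> < 1) at_top"
    by (auto simp: tendsto_iff dist_real_def)
  then obtain T where T: "\<And>x. x \<ge> T \<Longrightarrow> \<bar>x ^ j * exp (- \<beta> * x)\<bar> < 1"
    unfolding eventually_at_top_linorder by blast
  define T' where "T' = max (max T R) \<delta>"
  have "continuous_on {\<delta>..T'} (\<lambda>x. x ^ j * g x)"
    by (intro continuous_intros continuous_on_subset[OF cg]) auto
  then have "bounded ((\<lambda>x. x ^ j * g x) ` {\<delta>..T'})"
    by (intro compact_imp_bounded compact_continuous_image) auto
  then obtain B where B: "\<And>x. x \<in> {\<delta>..T'} \<Longrightarrow> \<bar>x ^ j * g x\<bar> \<le> B"
    unfolding bounded_real by blast
  have "\<bar>x ^ j * g x\<bar> \<le> max B \<bar>K\<bar>" if x: "x \<ge> \<delta>" for x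
  proof (cases "x \<le> T'")
    case True then show ?thesis using B[of x] x by auto
  next
    case False
    then have xT: "x \<ge> T" "x \<ge> R" "x > 0" unfolding T'_def using \<delta> by auto
    have "\<bar>x ^ j * g x\<bar> = x ^ j * \<bar>g x\<bar>" using xT by (simp add: abs_mult)
    also have "\<dots> \<le> x ^ j * (K * exp (- \<beta> * x))" using decay[OF xT(2)] xT by (intro mult_left_mono) auto
    also have "\<dots> = K * (x ^ j * exp (- \<beta> * x))" by simp
    also have "\<dots> \<le> \<bar>K\<bar> * \<bar>x ^ j * exp (- \<beta> * x)\<bar>" by (metis abs_ge_self abs_mult)
    also have "\<dots> \<le> \<bar>K\<bar>" using T[OF xT(1)] by (simp add: mult_left_le)
    finally show ?thesis by simp
  qed
  then show ?thesis by blast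
qed


section \<open>Regularity and decay of the eigenfunctions\<close>

lemma has_real_derivative_abs: "x \<noteq> (0::real) \<Longrightarrow> (abs has_real_derivative sgn x) (at x)"
proof (cases "x > 0")
  case True
  have "((\<lambda>x. x) has_real_derivative 1) (at x)" by simp
  then have "(abs has_real_derivative 1) (at x)"
    by (rule has_field_derivative_transform_within_open[of _ _ _ "{0<..}"]) (use True in auto)
  then show ?thesis using True by simp
next
  case False
  moreover assume "x \<noteq> 0"
  ultimately have x: "x < 0" by simp
  have "((\<lambda>x. - x) has_real_derivative -1) (at x)" by (auto intro!: derivative_eq_intros)
  then have "(abs has_real_derivative -1) (at x)"
    by (rule has_field_derivative_transform_within_open[of _ _ _ "{..<0}"]) (use x in auto)
  then show ?thesis using x by simp
qed

lemma has_real_derivative_sgn: "x \<noteq> (0::real) \<Longrightarrow> (sgn has_real_derivative 0) (at x)"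
proof -
  assume "x \<noteq> 0"
  then consider "x > 0" | "x < 0" by linarith
  then show ?thesis
  proof cases
    case 1
    have "((\<lambda>x. 1) has_real_derivative 0) (at x)" by simp
    then show ?thesis
      by (rule has_field_derivative_transform_within_open[of _ _ _ "{0<..}"]) (use 1 in auto)
  next
    case 2
    have "((\<lambda>x. -1) has_real_derivative 0) (at x)" by simp
    then show ?thesis
      by (rule has_field_derivative_transform_within_open[of _ _ _ "{..<0}"]) (use 2 in auto)
  qed
qed

lemma deriv_odd_if_even:
  assumes Y: "\<And>x. Y (- x) = Y x" and d: "\<And>x. x \<noteq> 0 \<Longrightarrow> (Y has_real_derivative deriv Y x) (at x)"
    and x: "x \<noteq> 0"
  shows "deriv Y (- x) = - deriv Y x"
proof -
  have "((\<lambda>x. - x) has_real_derivative -1) (at x)" by (auto intro!: derivative_eq_intros)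
  from DERIV_chain2[OF d[of "- x"] this] x
  have "((\<lambda>x. Y (- x)) has_real_derivative - deriv Y (- x)) (at x)" by simp
  moreover have "(\<lambda>x. Y (- x)) = Y" using Y by auto
  ultimately have "(Y has_real_derivative - deriv Y (- x)) (at x)" by simp
  from DERIV_unique[OF this d[OF x]] show ?thesis by simp
qed

lemma C2_away_from_0_if_weak_second_deriv:
  fixes f h k :: "real \<Rightarrow> real"
  assumes H2: "H2_punct_with f h" and AE: "AE x in lborel. x \<noteq> 0 \<longrightarrow> h x = k x"
    and cf: "continuous_on UNIV f" and ck: "continuous_on UNIV k" and x: "x \<noteq> 0"
  shows "(f has_real_derivative deriv f x) (at x) \<and> (deriv f has_real_derivative k x) (at x)"
proof -
  obtain l r where lr: "l < r" "x \<in> {l<..<r}" "{l<..<r} \<subseteq> - {0}"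
  proof (cases "x > 0")
    case True
    then show ?thesis using that[of "x/2" "2*x"] by auto
  next
    case False
    then show ?thesis using that[of "2*x" "x/2"] x by auto
  qed
  have "test_fun (- {0}) \<phi>" if "test_fun {l<..<r} \<phi>" for \<phi>
    using that lr(3) unfolding test_fun_def by auto
  then show ?thesis
    using C2_if_weak_second_deriv[OF lr(1) cf ck weak_second_deriv_test_identity[OF H2 AE ck] lr(2)]
    by blast
qed

text \<open>Only \<open>p > 1\<close> and \<open>\<omega> > 0\<close> are needed (not \<open>\<gamma> < 0\<close>, \<open>e > 0\<close> or nontriviality); in particular the
  argument of \<open>artanh\<close> may lie outside \<open>(-1, 1)\<close>, where its value is junk.\<close>

locale eigenpair =
  fixes p \<omega> \<gamma> e :: real and Y1 Y2 :: "real \<Rightarrow> real"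
  assumes p: "p > 1" and \<omega>: "\<omega> > 0"
    and D1: "D_even \<gamma> Y1" and D2: "D_even \<gamma> Y2"
    and Lp: "Lplus_eq p \<omega> \<gamma> Y1 (\<lambda>x. e * Y2 x)" and Lm: "Lminus_eq p \<omega> \<gamma> Y2 (\<lambda>x. - e * Y1 x)"
begin

definition "amp = (p + 1) * \<omega> / 2"
definition "rate = (p - 1) * sqrt \<omega> / 2"
definition "phase x = rate * \<bar>x\<bar> + artanh (\<gamma> / (2 * sqrt \<omega>))"
definition "sech_phase x = 1 / cosh (phase x)"
definition "tanh_phase x = tanh (phase x)"
definition "V x = amp * (sech_phase x * sech_phase x)"

lemma amp_pos: "amp > 0" unfolding amp_def using p \<omega> by simp
lemma rate_pos: "rate > 0" unfolding rate_def using p \<omega> by simp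

lemma Q_powr_eq_V: "Q p \<omega> \<gamma> x powr (p - 1) = V x"
proof -
  define B where "B = (p + 1) * \<omega> / 2 *
      (1 / cosh ((p - 1) * sqrt \<omega> / 2 * \<bar>x\<bar> + artanh (\<gamma> / (2 * sqrt \<omega>))))\<^sup>2"
  have "B > 0" unfolding B_def using p \<omega> by simp
  then have "Q p \<omega> \<gamma> x powr (p - 1) = B"
    unfolding Q_def B_def[symmetric] using p by (simp add: powr_powr)
  also have "\<dots> = V x"
    unfolding B_def V_def amp_def sech_phase_def phase_def rate_def by (simp add: power2_eq_square)
  finally show ?thesis .
qed

lemma V_nonneg: "V x \<ge> 0" unfolding V_def using amp_pos by simp

lemma sech_phase_bounds: "\<bar>sech_phase x\<bar> \<le> 1" "sech_phase x > 0"
  unfolding sech_phase_def using cosh_real_ge_1[of "phase x"] by auto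

lemma V_le_amp: "V x \<le> amp"
proof -
  have "sech_phase x * sech_phase x \<le> 1" using sech_phase_bounds[of x] by (simp add: abs_le_iff mult_le_one)
  then show ?thesis unfolding V_def using amp_pos by (simp add: mult_left_le)
qed

lemma continuous_on_V: "continuous_on UNIV V"
  unfolding V_def[abs_def] sech_phase_def[abs_def] phase_def[abs_def]
  by (intro continuous_intros continuous_on_compose2[OF continuous_on_cosh]) auto

lemma has_real_derivative_phase: "x \<noteq> 0 \<Longrightarrow> (phase has_real_derivative rate * sgn x) (at x)"
  unfolding phase_def[abs_def] using has_real_derivative_abs[of x]
  by (auto intro!: derivative_eq_intros)

lemma has_real_derivative_sech_phase:
  assumes "x \<noteq> 0"
  shows "(sech_phase has_real_derivative - rate * sgn x * sech_phase x * tanh_phase x) (at x)"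
proof -
  have "((\<lambda>x. 1 / cosh (phase x)) has_real_derivative
      - (sinh (phase x) * (rate * sgn x)) / (cosh (phase x))\<^sup>2) (at x)"
    using has_real_derivative_phase[OF assms] by (auto intro!: derivative_eq_intros simp: power2_eq_square)
  moreover have "- (sinh (phase x) * (rate * sgn x)) / (cosh (phase x))\<^sup>2
      = - rate * sgn x * sech_phase x * tanh_phase x"
    unfolding sech_phase_def tanh_phase_def tanh_def by (simp add: power2_eq_square field_simps)
  ultimately show ?thesis unfolding sech_phase_def[abs_def] by simp
qed

lemma has_real_derivative_tanh_phase:
  assumes "x \<noteq> 0"
  shows "(tanh_phase has_real_derivative rate * sgn x * (1 - tanh_phase x * tanh_phase x)) (at x)"
proof -
  have "((\<lambda>x. tanh (phase x)) has_real_derivative (1 - tanh (phase x) ^ 2) * (rate * sgn x)) (at x)"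
    using has_real_derivative_phase[OF assms] by (auto intro!: derivative_eq_intros)
  then show ?thesis unfolding tanh_phase_def[abs_def] by (simp add: power2_eq_square algebra_simps)
qed

definition "Y1_dd x = \<omega> * Y1 x - p * V x * Y1 x - e * Y2 x"
definition "Y2_dd x = \<omega> * Y2 x - V x * Y2 x + e * Y1 x"

lemma continuous_on_Y1: "continuous_on UNIV Y1" using D1 unfolding D_even_def by simp
lemma continuous_on_Y2: "continuous_on UNIV Y2" using D2 unfolding D_even_def by simp

lemma Y1_C2:
  assumes "x \<noteq> 0"
  shows "(Y1 has_real_derivative deriv Y1 x) (at x) \<and> (deriv Y1 has_real_derivative Y1_dd x) (at x)"
proof -
  obtain h where H2: "H2_punct_with Y1 h" and AE: "AE x in lborel. x \<noteq> 0 \<longrightarrow>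
      - h x + \<omega> * Y1 x - p * (Q p \<omega> \<gamma> x) powr (p - 1) * Y1 x = e * Y2 x"
    using Lp unfolding Lplus_eq_def by blast
  from AE have "AE x in lborel. x \<noteq> 0 \<longrightarrow> h x = Y1_dd x"
    by eventually_elim (auto simp: Y1_dd_def Q_powr_eq_V)
  moreover have "continuous_on UNIV Y1_dd" unfolding Y1_dd_def[abs_def]
    by (intro continuous_intros continuous_on_Y1 continuous_on_Y2 continuous_on_V)
  ultimately show ?thesis
    using C2_away_from_0_if_weak_second_deriv[OF H2 _ continuous_on_Y1 _ assms] by blast
qed

lemma Y2_C2:
  assumes "x \<noteq> 0"
  shows "(Y2 has_real_derivative deriv Y2 x) (at x) \<and> (deriv Y2 has_real_derivative Y2_dd x) (at x)"
proof -
  obtain h where H2: "H2_punct_with Y2 h" and AE: "AE x in lborel. x \<noteq> 0 \<longrightarrow>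
      - h x + \<omega> * Y2 x - (Q p \<omega> \<gamma> x) powr (p - 1) * Y2 x = - e * Y1 x"
    using Lm unfolding Lminus_eq_def by blast
  from AE have "AE x in lborel. x \<noteq> 0 \<longrightarrow> h x = Y2_dd x"
    by eventually_elim (auto simp: Y2_dd_def Q_powr_eq_V)
  moreover have "continuous_on UNIV Y2_dd" unfolding Y2_dd_def[abs_def]
    by (intro continuous_intros continuous_on_Y1 continuous_on_Y2 continuous_on_V)
  ultimately show ?thesis
    using C2_away_from_0_if_weak_second_deriv[OF H2 _ continuous_on_Y2 _ assms] by blast
qed

definition "jets = {Y1, Y2, deriv Y1, deriv Y2}"
definition "coeff_gens = jets \<union> {sech_phase, tanh_phase, sgn}"

lemma coeff_gens_in_fun_alg:
  "Y1 \<in> fun_alg coeff_gens" "Y2 \<in> fun_alg coeff_gens" "deriv Y1 \<in> fun_alg coeff_gens" "deriv Y2 \<in> fun_alg coeff_gens"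
  "sech_phase \<in> fun_alg coeff_gens" "tanh_phase \<in> fun_alg coeff_gens" "sgn \<in> fun_alg coeff_gens"
  unfolding coeff_gens_def jets_def by (auto intro: fun_alg.generator)

lemma V_in_fun_alg: "V \<in> fun_alg coeff_gens"
  unfolding V_def[abs_def] by (intro fun_alg.mult fun_alg.const coeff_gens_in_fun_alg)

lemma deriv_closed_coeff_gens: "deriv_closed_on (- {0}) (fun_alg coeff_gens)"
proof (rule deriv_closed_on_fun_alg)
  have dd: "Y1_dd \<in> fun_alg coeff_gens" "Y2_dd \<in> fun_alg coeff_gens"
    unfolding Y1_dd_def[abs_def] Y2_dd_def[abs_def]
    by (intro fun_alg_diff fun_alg.add fun_alg.mult fun_alg.const coeff_gens_in_fun_alg V_in_fun_alg)+
  have sech': "(\<lambda>x. - rate * sgn x * sech_phase x * tanh_phase x) \<in> fun_alg coeff_gens"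
    and tanh': "(\<lambda>x. rate * sgn x * (1 - tanh_phase x * tanh_phase x)) \<in> fun_alg coeff_gens"
    by (intro fun_alg.mult fun_alg_diff fun_alg.const coeff_gens_in_fun_alg)+
  fix t assume "t \<in> coeff_gens"
  then consider "t = Y1" | "t = Y2" | "t = deriv Y1" | "t = deriv Y2" | "t = sech_phase"
    | "t = tanh_phase" | "t = sgn"
    unfolding coeff_gens_def jets_def by blast
  then show "\<exists>t'\<in>fun_alg coeff_gens. \<forall>x\<in>- {0}. (t has_real_derivative t' x) (at x)"
  proof cases
    case 1 then show ?thesis using Y1_C2 coeff_gens_in_fun_alg by blast
  next
    case 2 then show ?thesis using Y2_C2 coeff_gens_in_fun_alg by blast
  next
    case 3 then show ?thesis using Y1_C2 dd by blast
  next
    case 4 then show ?thesis using Y2_C2 dd by blast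
  next
    case 5 show ?thesis unfolding 5 by (rule bexI[OF _ sech']) (use has_real_derivative_sech_phase in auto)
  next
    case 6 show ?thesis unfolding 6 by (rule bexI[OF _ tanh']) (use has_real_derivative_tanh_phase in auto)
  next
    case 7 show ?thesis unfolding 7 by (rule bexI[OF _ fun_alg.const]) (use has_real_derivative_sgn in auto)
  qed
qed

definition "Y_module = fun_module (fun_alg coeff_gens) jets"

lemma jets_in_Y_module: "Y1 \<in> Y_module" "Y2 \<in> Y_module" "deriv Y1 \<in> Y_module" "deriv Y2 \<in> Y_module"
  unfolding Y_module_def jets_def by (auto intro: fun_module.generator)

lemma deriv_closed_Y_module: "deriv_closed_on (- {0}) Y_module"
  unfolding Y_module_def
proof (rule deriv_closed_on_fun_module[OF deriv_closed_coeff_gens])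
  have "(\<lambda>x. (\<lambda>x. \<omega> - p * V x) x * Y1 x + (\<lambda>x. - e) x * Y2 x) \<in> Y_module"
    "(\<lambda>x. (\<lambda>x. \<omega> - V x) x * Y2 x + (\<lambda>x. e) x * Y1 x) \<in> Y_module"
    unfolding Y_module_def
    by (intro fun_module.add fun_module.scale fun_alg_diff fun_alg.mult fun_alg.const V_in_fun_alg
        jets_in_Y_module[unfolded Y_module_def])+
  then have dd: "Y1_dd \<in> Y_module" "Y2_dd \<in> Y_module"
    unfolding Y1_dd_def[abs_def] Y2_dd_def[abs_def] by (simp_all add: algebra_simps)
  fix y assume "y \<in> jets"
  then consider "y = Y1" | "y = Y2" | "y = deriv Y1" | "y = deriv Y2" unfolding jets_def by blast
  then show "\<exists>f\<in>fun_module (fun_alg coeff_gens) jets. \<forall>x\<in>- {0}. (y has_real_derivative f x) (at x)"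
    using Y1_C2 Y2_C2 jets_in_Y_module dd unfolding Y_module_def by cases blast+
qed


definition "modsq x = (Y1 x)\<^sup>2 + (Y2 x)\<^sup>2"
definition "modsq_d1 x = 2 * Y1 x * deriv Y1 x + 2 * Y2 x * deriv Y2 x"
definition "modsq_d2 x = 2 * (deriv Y1 x)\<^sup>2 + 2 * Y1 x * Y1_dd x + 2 * (deriv Y2 x)\<^sup>2 + 2 * Y2 x * Y2_dd x"

lemma integrable_modsq: "integrable lborel modsq"
proof -
  have "integrable lborel (\<lambda>x. (Y x)\<^sup>2)" if "D_even \<gamma> Y" for Y
    using that unfolding D_even_def H1_def L2_on_def set_integrable_def by simp
  from Bochner_Integration.integrable_add[OF this[OF D1] this[OF D2]] show ?thesis unfolding modsq_def[abs_def] .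
qed

lemma modsq_nonneg: "modsq x \<ge> 0" unfolding modsq_def by simp

lemma has_real_derivative_modsq: "x \<noteq> 0 \<Longrightarrow> (modsq has_real_derivative modsq_d1 x) (at x)"
  unfolding modsq_def[abs_def] modsq_d1_def using Y1_C2 Y2_C2
  by (auto intro!: derivative_eq_intros simp: power2_eq_square)

lemma has_real_derivative_modsq_d1: "x \<noteq> 0 \<Longrightarrow> (modsq_d1 has_real_derivative modsq_d2 x) (at x)"
  unfolding modsq_d1_def[abs_def] modsq_d2_def using Y1_C2 Y2_C2
  by (auto intro!: derivative_eq_intros simp: power2_eq_square algebra_simps)

text \<open>The coupling terms \<open>\<mp> e Y\<^sub>1 Y\<^sub>2\<close> cancel in \<open>(Y\<^sub>1\<^sup>2 + Y\<^sub>2\<^sup>2)''\<close>.\<close>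

lemma modsq_d2_ge: "modsq_d2 x \<ge> 2 * (\<omega> - p * V x) * modsq x"
proof -
  have "modsq_d2 x - 2 * (\<omega> - p * V x) * modsq x
      = 2 * (deriv Y1 x)\<^sup>2 + 2 * (deriv Y2 x)\<^sup>2 + 2 * (p - 1) * V x * (Y2 x)\<^sup>2"
    unfolding modsq_d2_def modsq_def Y1_dd_def Y2_dd_def by (simp add: algebra_simps power2_eq_square)
  moreover have "(p - 1) * V x * (Y2 x)\<^sup>2 \<ge> 0" using p V_nonneg by simp
  moreover have "(deriv Y1 x)\<^sup>2 \<ge> 0" "(deriv Y2 x)\<^sup>2 \<ge> 0" by simp_all
  ultimately show ?thesis by linarith
qed

lemma eventually_V_small: "eventually (\<lambda>x. p * V x \<le> \<omega> / 4) at_top"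
proof -
  define c where "c = artanh (\<gamma> / (2 * sqrt \<omega>))"
  have "((\<lambda>x. amp * (1 / cosh (rate * x + c)) * (1 / cosh (rate * x + c))) \<longlongrightarrow> 0) at_top"
    using rate_pos unfolding cosh_field_def by real_asymp
  then have "eventually (\<lambda>x. \<bar>amp * (1 / cosh (rate * x + c)) * (1 / cosh (rate * x + c))\<bar>
      < \<omega> / (4 * p)) at_top"
    using \<omega> p by (auto simp: tendsto_iff dist_real_def)
  moreover have "eventually (\<lambda>x. x > (0::real)) at_top" by simp
  ultimately show ?thesis
  proof eventually_elim
    case (elim x)
    then have "V x < \<omega> / (4 * p)" unfolding V_def sech_phase_def phase_def c_def using amp_pos by simp
    then show ?case using p by (simp add: field_simps)
  qed
qed

lemma modsq_exp_decay: "\<exists>R>0. \<forall>x\<ge>R. modsq x \<le> modsq R * exp (- sqrt \<omega> * (x - R))"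
proof -
  obtain R0 where R0: "\<And>x. x \<ge> R0 \<Longrightarrow> p * V x \<le> \<omega> / 4"
    using eventually_V_small unfolding eventually_at_top_linorder by blast
  define R where "R = max R0 1"
  have "modsq_d2 x \<ge> \<omega> * modsq x" if "x \<ge> R" for x
  proof -
    have "2 * (\<omega> - p * V x) \<ge> \<omega>" using R0[of x] that \<omega> unfolding R_def by simp
    then have "2 * (\<omega> - p * V x) * modsq x \<ge> \<omega> * modsq x" using modsq_nonneg by (simp add: mult_right_mono)
    then show ?thesis using modsq_d2_ge[of x] by linarith
  qed
  moreover have "x \<noteq> 0" if "x \<ge> R" for x using that unfolding R_def by auto
  ultimately have "modsq x \<le> modsq R * exp (- sqrt \<omega> * (x - R))" if "x \<ge> R" for x
    using integrable_subsolution_exp_decay[OF integrable_modsq modsq_nonneg \<omega> _ _ _ that]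
      has_real_derivative_modsq has_real_derivative_modsq_d1 by blast
  moreover have "R > 0" unfolding R_def by simp
  ultimately show ?thesis by blast
qed

lemma Y_exp_decay:
  obtains R K where "R > 0" "K \<ge> 0"
    "\<And>x. x \<ge> R \<Longrightarrow> \<bar>Y1 x\<bar> \<le> K * exp (- (sqrt \<omega> / 2) * x)"
    "\<And>x. x \<ge> R \<Longrightarrow> \<bar>Y2 x\<bar> \<le> K * exp (- (sqrt \<omega> / 2) * x)"
proof -
  obtain R where R: "R > 0" and decay: "\<And>x. x \<ge> R \<Longrightarrow> modsq x \<le> modsq R * exp (- sqrt \<omega> * (x - R))"
    using modsq_exp_decay by blast
  define \<beta> where "\<beta> = sqrt \<omega> / 2"
  define K where "K = sqrt (modsq R) * exp (\<beta> * R)"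
  have "\<bar>Y x\<bar> \<le> K * exp (- \<beta> * x)" if x: "x \<ge> R" and Y: "(Y x)\<^sup>2 \<le> modsq x" for Y x
  proof -
    have "modsq R * exp (- sqrt \<omega> * (x - R)) = (K * exp (- \<beta> * x))\<^sup>2"
      unfolding K_def \<beta>_def using modsq_nonneg[of R]
      by (simp add: power_mult_distrib exp_double[symmetric] exp_add[symmetric] algebra_simps)
    then have "\<bar>Y x\<bar>\<^sup>2 \<le> (K * exp (- \<beta> * x))\<^sup>2" using Y decay[OF x] by simp
    then show ?thesis by (rule power2_le_imp_le) (use modsq_nonneg[of R] in \<open>simp add: K_def\<close>)
  qed
  moreover have "(Y1 x)\<^sup>2 \<le> modsq x" "(Y2 x)\<^sup>2 \<le> modsq x" for x unfolding modsq_def by simp_all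
  moreover have "K \<ge> 0" unfolding K_def using modsq_nonneg[of R] by simp
  ultimately show ?thesis using that R unfolding \<beta>_def by blast
qed

lemma abs_Y_dd_le:
  assumes Y1: "\<bar>Y1 x\<bar> \<le> E" and Y2: "\<bar>Y2 x\<bar> \<le> E"
  shows "\<bar>Y1_dd x\<bar> \<le> (\<omega> + p * amp + \<bar>e\<bar>) * E" "\<bar>Y2_dd x\<bar> \<le> (\<omega> + p * amp + \<bar>e\<bar>) * E"
proof -
  have V: "0 \<le> V x" "V x \<le> amp" using V_nonneg V_le_amp by auto
  have E: "E \<ge> 0" using Y1 by linarith
  have \<omega>Y: "\<bar>\<omega> * Y1 x\<bar> \<le> \<omega> * E" "\<bar>\<omega> * Y2 x\<bar> \<le> \<omega> * E"
    using Y1 Y2 \<omega> by (auto simp: abs_mult intro: mult_left_mono)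
  have eY: "\<bar>e * Y1 x\<bar> \<le> \<bar>e\<bar> * E" "\<bar>e * Y2 x\<bar> \<le> \<bar>e\<bar> * E"
    using Y1 Y2 by (auto simp: abs_mult intro: mult_left_mono)
  have VY1: "\<bar>p * V x * Y1 x\<bar> \<le> p * amp * E"
    using p V Y1 E by (simp add: abs_mult mult_mono)
  have "\<bar>V x * Y2 x\<bar> \<le> amp * E" using V Y2 by (simp add: abs_mult mult_mono)
  also have "\<dots> \<le> p * amp * E" using p amp_pos E by (simp add: mult_right_mono)
  finally have VY2: "\<bar>V x * Y2 x\<bar> \<le> p * amp * E" .
  have "(\<omega> + p * amp + \<bar>e\<bar>) * E = \<omega> * E + p * amp * E + \<bar>e\<bar> * E" by (simp add: algebra_simps)
  then show "\<bar>Y1_dd x\<bar> \<le> (\<omega> + p * amp + \<bar>e\<bar>) * E" "\<bar>Y2_dd x\<bar> \<le> (\<omega> + p * amp + \<bar>e\<bar>) * E"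
    unfolding Y1_dd_def Y2_dd_def using \<omega>Y eY VY1 VY2 by linarith+
qed

lemma jets_exp_decay:
  obtains R \<beta> K where "R > 0" "\<beta> > 0" "\<And>g x. g \<in> jets \<Longrightarrow> x \<ge> R \<Longrightarrow> \<bar>g x\<bar> \<le> K * exp (- \<beta> * x)"
proof -
  obtain R K0 where R: "R > 0" and K0: "K0 \<ge> 0"
    and Y: "\<And>x. x \<ge> R \<Longrightarrow> \<bar>Y1 x\<bar> \<le> K0 * exp (- (sqrt \<omega> / 2) * x)"
      "\<And>x. x \<ge> R \<Longrightarrow> \<bar>Y2 x\<bar> \<le> K0 * exp (- (sqrt \<omega> / 2) * x)"
    using Y_exp_decay by blast
  define \<beta> where "\<beta> = sqrt \<omega> / 2"
  have \<beta>: "\<beta> > 0" unfolding \<beta>_def using \<omega> by simp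
  note Y = Y[folded \<beta>_def]
  have "K0 * exp (- \<beta> * x) \<le> K0" if "x \<ge> R" for x
    using \<beta> R that K0 by (simp add: mult_left_le)
  then have bounded: "\<bar>Y1 x\<bar> \<le> K0" "\<bar>Y2 x\<bar> \<le> K0" if "x \<ge> R" for x
    using Y[OF that] that by fastforce+
  define C where "C = (\<omega> + p * amp + \<bar>e\<bar>) * K0"
  have dd: "\<bar>Y1_dd x\<bar> \<le> C * exp (- \<beta> * x)" "\<bar>Y2_dd x\<bar> \<le> C * exp (- \<beta> * x)" if "x \<ge> R" for x
    using abs_Y_dd_le[OF Y(1)[OF that] Y(2)[OF that]] unfolding C_def by (simp_all add: mult.assoc)
  have nz: "x \<noteq> 0" if "x \<ge> R" for x using that R by auto
  have dY1: "\<bar>deriv Y1 x\<bar> \<le> C / \<beta> * exp (- \<beta> * x)" if "x \<ge> R" for x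
    by (rule abs_deriv_le_exp_if_bounded[OF \<beta> _ _ dd(1) bounded(1) that]) (use Y1_C2 nz in auto)
  have dY2: "\<bar>deriv Y2 x\<bar> \<le> C / \<beta> * exp (- \<beta> * x)" if "x \<ge> R" for x
    by (rule abs_deriv_le_exp_if_bounded[OF \<beta> _ _ dd(2) bounded(2) that]) (use Y2_C2 nz in auto)
  define K where "K = max K0 (C / \<beta>)"
  have le: "a * exp (- \<beta> * x) \<le> K * exp (- \<beta> * x)" if "a \<le> K" for a x
    using that by (simp add: mult_right_mono)
  have "\<bar>g x\<bar> \<le> K * exp (- \<beta> * x)" if g: "g \<in> jets" and x: "x \<ge> R" for g x
  proof -
    have "K0 * exp (- \<beta> * x) \<le> K * exp (- \<beta> * x)" "C / \<beta> * exp (- \<beta> * x) \<le> K * exp (- \<beta> * x)"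
      using le[of K0 x] le[of "C / \<beta>" x] unfolding K_def by auto
    then have "\<bar>Y1 x\<bar> \<le> K * exp (- \<beta> * x)" "\<bar>Y2 x\<bar> \<le> K * exp (- \<beta> * x)"
      "\<bar>deriv Y1 x\<bar> \<le> K * exp (- \<beta> * x)" "\<bar>deriv Y2 x\<bar> \<le> K * exp (- \<beta> * x)"
      using Y[OF x] dY1[OF x] dY2[OF x] by linarith+
    then show ?thesis using g unfolding jets_def by auto
  qed
  with R \<beta> show ?thesis using that by blast
qed

lemma abs_jets_even: "g \<in> jets \<Longrightarrow> x \<noteq> 0 \<Longrightarrow> \<bar>g (- x)\<bar> = \<bar>g x\<bar>"
proof -
  assume g: "g \<in> jets" and x: "x \<noteq> 0"
  have even: "Y1 (- x) = Y1 x" "Y2 (- x) = Y2 x" for x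
    using D1 D2 unfolding D_even_def by simp_all
  have "deriv Y1 (- x) = - deriv Y1 x" "deriv Y2 (- x) = - deriv Y2 x"
    by (rule deriv_odd_if_even; use even Y1_C2 Y2_C2 x in auto)+
  then show ?thesis using g even unfolding jets_def by auto
qed

lemma jets_power_bounded:
  assumes g: "g \<in> jets" and \<delta>: "\<delta> > 0"
  shows "\<exists>C. \<forall>x. \<bar>x\<bar> \<ge> \<delta> \<longrightarrow> \<bar>x ^ j * g x\<bar> \<le> C"
proof -
  obtain R \<beta> K where \<beta>: "\<beta> > 0" and decay: "\<And>x. x \<ge> R \<Longrightarrow> \<bar>g x\<bar> \<le> K * exp (- \<beta> * x)"
    using jets_exp_decay g by metis
  have "isCont g x" if "x \<ge> \<delta>" for x
  proof -
    have "x \<noteq> 0" using that \<delta> by auto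
    then show ?thesis using g Y1_C2 Y2_C2 unfolding jets_def by (auto intro: DERIV_isCont)
  qed
  then have "continuous_on {\<delta>..} g" by (simp add: continuous_at_imp_continuous_on)
  then obtain C where C: "\<And>x. x \<ge> \<delta> \<Longrightarrow> \<bar>x ^ j * g x\<bar> \<le> C"
    using power_times_bounded_if_exp_decay[OF \<beta> \<delta> decay] by blast
  have "\<bar>x ^ j * g x\<bar> \<le> C" if x: "\<bar>x\<bar> \<ge> \<delta>" for x
  proof (cases "x \<ge> 0")
    case True then show ?thesis using C x by simp
  next
    case False
    then have "\<bar>x ^ j * g x\<bar> = \<bar>(- x) ^ j * g (- x)\<bar>"
      using abs_jets_even[OF g, of x] by (simp add: abs_mult power_abs)
    also have "\<dots> \<le> C" using C x False by simp
    finally show ?thesis .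
  qed
  then show ?thesis by blast
qed

lemma Y_module_power_bounded:
  assumes \<delta>: "\<delta> > 0" and f: "f \<in> Y_module"
  shows "\<exists>C. \<forall>x. \<bar>x\<bar> \<ge> \<delta> \<longrightarrow> \<bar>x ^ j * f x\<bar> \<le> C"
proof -
  let ?S = "{x. \<bar>x\<bar> \<ge> \<delta>}"
  have gens: "\<exists>B. \<forall>x\<in>?S. \<bar>g x\<bar> \<le> B" if g: "g \<in> coeff_gens" for g
  proof -
    consider "g \<in> jets" | "g = sech_phase" | "g = tanh_phase" | "g = sgn"
      using g unfolding coeff_gens_def by blast
    then show ?thesis
    proof cases
      case 1 then show ?thesis using jets_power_bounded[OF 1 \<delta>, of 0] by auto
    next
      case 2 then show ?thesis using sech_phase_bounds by blast
    next
      case 3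
      have "\<bar>tanh_phase x\<bar> \<le> 1" for x unfolding tanh_phase_def using tanh_real_bounds[of "phase x"] by auto
      then show ?thesis using 3 by blast
    next
      case 4 then show ?thesis by (intro exI[of _ 1]) (simp add: abs_sgn_eq)
    qed
  qed
  have "\<exists>C. \<forall>x\<in>?S. \<bar>x ^ j * f x\<bar> \<le> C"
  proof (rule power_weighted_bound_fun_module[where R = "fun_alg coeff_gens" and G = jets])
    show "f \<in> fun_module (fun_alg coeff_gens) jets" using f unfolding Y_module_def .
    show "\<exists>B. \<forall>x\<in>?S. \<bar>r x\<bar> \<le> B" if "r \<in> fun_alg coeff_gens" for r
      by (rule bounded_fun_alg[OF gens that])
    show "\<exists>C. \<forall>x\<in>?S. \<bar>x ^ j * g x\<bar> \<le> C" if "g \<in> jets" for g j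
      using jets_power_bounded[OF that \<delta>, of j] by auto
  qed
  then show ?thesis by auto
qed

lemma Y_module_tilde_schwartz:
  assumes f: "f \<in> Y_module"
  shows "f \<in> tilde_schwartz"
  unfolding tilde_schwartz_def
proof (intro CollectI conjI ballI)
  show "smooth_on (- {0}) f" by (rule smooth_on_if_deriv_closed_on[OF _ deriv_closed_Y_module f]) auto
  fix \<phi> assume "\<phi> \<in> BC0_inf"
  then obtain a b where sm: "smooth_on UNIV \<phi>" and bd: "\<And>k. \<exists>C. \<forall>x. \<bar>(deriv ^^ k) \<phi> x\<bar> \<le> C"
    and ab: "a < 0" "0 < b" and van: "\<forall>x\<in>{a<..<b}. \<phi> x = 0"
    unfolding BC0_inf_def by blast
  have dc: "deriv_closed_on UNIV (cutoff_span \<phi> Y_module)"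
    by (rule deriv_closed_cutoff_span[OF sm ab van deriv_closed_Y_module])
  have mem: "(\<lambda>x. \<phi> x * f x) \<in> cutoff_span \<phi> Y_module"
    using cutoff_span.generator[OF f, where n = 0 and \<phi> = \<phi>] by simp
  show "(\<lambda>x. \<phi> x * f x) \<in> schwartz"
    unfolding schwartz_def
  proof (intro CollectI conjI allI)
    show "smooth_on UNIV (\<lambda>x. \<phi> x * f x)" by (rule smooth_on_if_deriv_closed_on[OF open_UNIV dc mem])
    fix j k
    obtain t where t: "t \<in> cutoff_span \<phi> Y_module" "\<And>x. (deriv ^^ k) (\<lambda>x. \<phi> x * f x) x = t x"
      using deriv_closed_on_higher_deriv[OF open_UNIV dc mem, of k] by blast
    moreover have "\<exists>C. \<forall>x. \<bar>x\<bar> \<ge> min (-a) b \<longrightarrow> \<bar>x ^ j * g x\<bar> \<le> C" if "g \<in> Y_module" for g j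
      by (rule Y_module_power_bounded[OF _ that]) (use ab in simp)
    then obtain C where "\<forall>x. \<bar>x ^ j * t x\<bar> \<le> C"
      using power_weighted_bound_cutoff_span[OF bd ab van _ t(1)] by blast
    ultimately show "\<exists>C. \<forall>x. \<bar>x ^ j * (deriv ^^ k) (\<lambda>x. \<phi> x * f x) x\<bar> \<le> C" by auto
  qed
qed

end

theorem lemma2p18:
  fixes p \<omega> \<gamma> e :: real and Y1 Y2 :: "real \<Rightarrow> real"
  assumes "\<gamma> < 0" and "p > 5" and "\<omega> > \<gamma>\<^sup>2 / 4"
    and "e > 0"
    and "D_even \<gamma> Y1" and "D_even \<gamma> Y2"
    and "\<exists>x. Y1 x \<noteq> 0 \<or> Y2 x \<noteq> 0"
    and "Lplus_eq p \<omega> \<gamma> Y1 (\<lambda>x. e * Y2 x)"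
    and "Lminus_eq p \<omega> \<gamma> Y2 (\<lambda>x. - e * Y1 x)"
  shows "Y1 \<in> tilde_schwartz \<and> Y2 \<in> tilde_schwartz"
proof -
  have "\<omega> > 0" using assms(3) by (smt (verit) zero_le_power2 divide_nonneg_pos)
  then interpret eigenpair p \<omega> \<gamma> e Y1 Y2
    by unfold_locales (use assms in auto)
  show ?thesis using Y_module_tilde_schwartz jets_in_Y_module by blast
qed

end
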